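(* Fix a BS index $k\in\{1,\dots,K\}$ and a sample index $t\in\{1,\dots,T\}$, and fix an arbitrary expansion point consisting of real numbers $C_k^{(i)},\eta_{g_k,t}^{(i)}$ and matrices $\mathbf{V}_{g,t}^{(i)}\in\mathbb{C}^{M\times d}$, $g=1,\dots,G$. Let $f_{k,t}^{(i)}$ be the function defined in the context. Then: (1.1) For all real $C_k,\eta_{g_k,t}$ and all $\mathbf{V}_{1,t},\dots,\mathbf{V}_{G,t}\in\mathbb{C}^{M\times d}$, $$f_{k,t}^{(i)}\big(C_k,\eta_{g_k,t},\{\mathbf{V}_{g,t}\}_{g=1}^G\big)\ \ge\ (F_{g_k}-C_k)\,\eta_{g_k,t}-\log\det\big(\mathbf{I}_N+\mathbf{H}_{k,t}\mathbf{V}_{g_k,t}\mathbf{V}_{g_k,t}^H\mathbf{H}_{k,t}^H\mathbf{J}_{k,t}\big),$$ with equality when $C_k=C_k^{(i)}$, $\eta_{g_k,t}=\eta_{g_k,t}^{(i)}$ and $\mathbf{V}_{g,t}=\mathbf{V}_{g,t}^{(i)}$ for all $g$. (1.2) At the expansion point $\big(C_k^{(i)},\eta_{g_k,t}^{(i)},\{\mathbf{V}_{g,t}^{(i)}\}_{g=1}^G\big)$, the partial derivatives of $f_{k,t}^{(i)}$ and of the right-hand side function $(C_k,\eta_{g_k,t},\{\mathbf{V}_{g,t}\})\mapsto (F_{g_k}-C_k)\eta_{g_k,t}-\log\det\big(\mathbf{I}_N+\mathbf{H}_{k,t}\mathbf{V}_{g_k,t}\mathbf{V}_{g_k,t}^H\mathbf{H}_{k,t}^H\mathbf{J}_{k,t}\big)$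 coincide with respect to $C_k$, to $\eta_{g_k,t}$, and to the real part and the imaginary part of every entry of every $\mathbf{V}_{g,t}$, $g=1,\dots,G$. Moreover $f_{k,t}^{(i)}$ is a convex quadratic function of $(C_k,\eta_{g_k,t},\{\mathbf{V}_{g,t}\}_{g=1}^G)$.
   Context: Setting: there are $G$ clusters and $K$ base stations (BSs); BS $k$ belongs to cluster $g_k\in\{1,\dots,G\}$, and $\mathcal{K}_g$ denotes the set of BSs in cluster $g$. Integers $M>N\ge1$ are given and $d=N$. For each $k$ and sample $t\in\{1,\dots,T\}$, $\mathbf{H}_{k,t}\in\mathbb{C}^{N\times M}$ is a fixed matrix, $\sigma_k^2>0$ is a fixed noise power, and $F_g>0$ are fixed file sizes. Variables: $\mathbf{V}_{g,t}\in\mathbb{C}^{M\times d}$, real $C_k$, real $\eta_{g,t}$. Define $$\mathbf{J}_{k,t}=\Big(\sum_{g'\neq g_k}\mathbf{H}_{k,t}\mathbf{V}_{g',t}\mathbf{V}_{g',t}^H\mathbf{H}_{k,t}^H+\sigma_k^2\mathbf{I}_N\Big)^{-1}.$$ Given the expansion point $(C_k^{(i)},\eta_{g_k,t}^{(i)},\{\mathbf{V}_{g,t}^{(i)}\})$, define $$\mathbf{U}_{k,t}^{(i)}=\Big(\sum_{g=1}^G\mathbf{H}_{k,t}\mathbf{V}_{g,t}^{(i)}(\mathbf{V}_{g,t}^{(i)})^H\mathbf{H}_{k,t}^H+\sigma_k^2\mathbf{I}_N\Big)^{-1}\mathbf{H}_{k,t}\mathbf{V}_{g_k,t}^{(i)},\qquad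 \mathbf{Q}_{k,t}^{(i)}=\mathbf{I}_d-(\mathbf{U}_{k,t}^{(i)})^H\mathbf{H}_{k,t}\mathbf{V}_{g_k,t}^{(i)},$$ $$\mathbf{A}_{k,t}^{(i)}=\mathbf{H}_{k,t}^H\mathbf{U}_{k,t}^{(i)}(\mathbf{Q}_{k,t}^{(i)})^{-1}(\mathbf{U}_{k,t}^{(i)})^H\mathbf{H}_{k,t},\qquad \mathbf{B}_{k,t}^{(i)}=-(\mathbf{Q}_{k,t}^{(i)})^{-1}(\mathbf{U}_{k,t}^{(i)})^H\mathbf{H}_{k,t},$$ $$b_{k,t}^{(i)}=\mathrm{Tr}\Big((\mathbf{Q}_{k,t}^{(i)})^{-1}\big(\mathbf{I}_d+\sigma_k^2(\mathbf{U}_{k,t}^{(i)})^H\mathbf{U}_{k,t}^{(i)}\big)\Big)+\log\det\mathbf{Q}_{k,t}^{(i)}+\tfrac12\big(\eta_{g_k,t}^{(i)}+C_k^{(i)}\big)^2-d,$$ and $$f_{k,t}^{(i)}\big(C_k,\eta_{g_k,t},\{\mathbf{V}_{g,t}\}_{g=1}^G\big)=\sum_{g=1}^G\mathrm{Tr}\big(\mathbf{V}_{g,t}^H\mathbf{A}_{k,t}^{(i)}\mathbf{V}_{g,t}\big)+2\,\Re\{\mathrm{Tr}(\mathbf{B}_{k,t}^{(i)}\mathbf{V}_{g_k,t})\}+\frac{\eta_{g_k,t}^2+C_k^2}{2}+F_{g_k}\eta_{g_k,t}-\big(\eta_{g_k,t}^{(i)}+C_k^{(i)}\big)\big(\eta_{g_k,t}+C_k\big)+b_{k,t}^{(i)}.$$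 Here $\log$ is the natural logarithm. *)

theory Defs
  imports "HOL-Analysis.Analysis"
begin

text \<open>Complex matrices are rendered as complex^'c^'r (rows 'r, columns 'c).
 N (= d) is the cardinality of 'n, M that of 'm; clusters are the finite type 'g.
 A family {V_g} of M x d precoders is an element of complex^'n^'m^'g.\<close>

definition hconj :: "complex^'c^'r \<Rightarrow> complex^'r^'c" where
  "hconj A = (\<chi> i j. cnj (A $ j $ i))"

definition Jmat :: "complex^'m^'n \<Rightarrow> real \<Rightarrow> 'g::finite \<Rightarrow> complex^'n^'m^'g \<Rightarrow> complex^'n^'n" where
  "Jmat H s2 gk V = matrix_inv
     ((\<Sum>g\<in>UNIV - {gk}. H ** (V $ g) ** hconj (V $ g) ** hconj H) + mat (complex_of_real s2))"

definition Umat :: "complex^'m^'n \<Rightarrow> real \<Rightarrow> 'g::finite \<Rightarrow> complex^'n^'m^'g \<Rightarrow> complex^'n^'n" where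
  "Umat H s2 gk V0 = matrix_inv
     ((\<Sum>g\<in>UNIV. H ** (V0 $ g) ** hconj (V0 $ g) ** hconj H) + mat (complex_of_real s2))
     ** H ** (V0 $ gk)"

definition Qmat :: "complex^'m^'n \<Rightarrow> real \<Rightarrow> 'g::finite \<Rightarrow> complex^'n^'m^'g \<Rightarrow> complex^'n^'n" where
  "Qmat H s2 gk V0 = mat 1 - hconj (Umat H s2 gk V0) ** H ** (V0 $ gk)"

definition Amat :: "complex^'m^'n \<Rightarrow> real \<Rightarrow> 'g::finite \<Rightarrow> complex^'n^'m^'g \<Rightarrow> complex^'m^'m" where
  "Amat H s2 gk V0 = hconj H ** Umat H s2 gk V0 ** matrix_inv (Qmat H s2 gk V0)
       ** hconj (Umat H s2 gk V0) ** H"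

definition Bmat :: "complex^'m^'n \<Rightarrow> real \<Rightarrow> 'g::finite \<Rightarrow> complex^'n^'m^'g \<Rightarrow> complex^'m^'n" where
  "Bmat H s2 gk V0 = - (matrix_inv (Qmat H s2 gk V0) ** hconj (Umat H s2 gk V0) ** H)"

definition bconst :: "complex^'m^'n \<Rightarrow> real \<Rightarrow> 'g::finite \<Rightarrow> real \<Rightarrow> real \<Rightarrow> complex^'n^'m^'g \<Rightarrow> real" where
  "bconst H s2 gk C0 eta0 V0 =
     Re (trace (matrix_inv (Qmat H s2 gk V0) **
          (mat 1 + mat (complex_of_real s2) ** (hconj (Umat H s2 gk V0) ** Umat H s2 gk V0))))
     + ln (Re (det (Qmat H s2 gk V0))) + (eta0 + C0)^2 / 2 - real CARD('n)"

text \<open>The surrogate f_{k,t}^{(i)}; Fk is F_{g_k}, (C0, eta0, V0) the expansion point.\<close>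
definition fsur :: "complex^'m^'n \<Rightarrow> real \<Rightarrow> real \<Rightarrow> 'g::finite \<Rightarrow> real \<Rightarrow> real \<Rightarrow> complex^'n^'m^'g
     \<Rightarrow> real \<Rightarrow> real \<Rightarrow> complex^'n^'m^'g \<Rightarrow> real" where
  "fsur H s2 Fk gk C0 eta0 V0 C eta V =
     (\<Sum>g\<in>UNIV. Re (trace (hconj (V $ g) ** Amat H s2 gk V0 ** (V $ g))))
     + 2 * Re (trace (Bmat H s2 gk V0 ** (V $ gk)))
     + (eta^2 + C^2) / 2 + Fk * eta - (eta0 + C0) * (eta + C)
     + bconst H s2 gk C0 eta0 V0"

definition rhs :: "complex^'m^'n \<Rightarrow> real \<Rightarrow> real \<Rightarrow> 'g::finite
     \<Rightarrow> real \<Rightarrow> real \<Rightarrow> complex^'n^'m^'g \<Rightarrow> real" where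
  "rhs H s2 Fk gk C eta V = (Fk - C) * eta
     - ln (Re (det (mat 1 + H ** (V $ gk) ** hconj (V $ gk) ** hconj H ** Jmat H s2 gk V)))"

definition Eunit :: "'g::finite \<Rightarrow> 'm \<Rightarrow> 'n \<Rightarrow> complex \<Rightarrow> complex^'n^'m^'g" where
  "Eunit g i j c = (\<chi> h a b. if h = g \<and> a = i \<and> b = j then c else 0)"

definition quadratic_fun :: "('a::real_vector \<Rightarrow> real) \<Rightarrow> bool" where
  "quadratic_fun f \<longleftrightarrow> (\<exists>B l c. bilinear B \<and> linear l \<and> (\<forall>x. f x = B x x + l x + c))"

end

theory Submission
  imports Defs "Jordan_Normal_Form.Schur_Decomposition"
begin

text \<open>
  Write \<open>G = H V\<^sub>g\<^sub>k\<close> for the effective channel of the served cluster, \<open>S\<close> for the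
  interference-plus-noise covariance (so \<open>J = S\<^sup>-\<^sup>1\<close>) and \<open>R = S + G G\<^sup>H\<close> for the
  received covariance; a subscript 0 marks the same quantities at the expansion point.
  Up to the scalar part, the surrogate is the weighted MSE \<open>tr(W E(V)) - log det W - N\<close>
  of the fixed receiver \<open>U = R\<^sub>0\<^sup>-\<^sup>1 G\<^sub>0\<close> with weight \<open>W = Q\<^sup>-\<^sup>1\<close>, where \<open>E(V)\<close> is the MSE
  matrix of \<open>U\<close>.  By the Woodbury identity \<open>W = I + G\<^sub>0\<^sup>H S\<^sub>0\<^sup>-\<^sup>1 G\<^sub>0\<close>, and completing
  the square gives \<open>E(V) = P\<^sup>-\<^sup>1 + Z\<^sup>H R Z\<close> with \<open>P = I + G\<^sup>H S\<^sup>-\<^sup>1 G\<close>, \<open>Z = U - R\<^sup>-\<^sup>1 G\<close>.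
  Hence \<open>tr(W E(V)) - log det W - N \<ge> tr(W P\<^sup>-\<^sup>1) - N - log det W \<ge> -log det P\<close>, the last
  step being \<open>log det X \<le> tr X - N\<close> for \<open>X = W P\<^sup>-\<^sup>1\<close>, whose eigenvalues are positive;
  by Sylvester's determinant identity \<open>det P = det(I + G G\<^sup>H J)\<close>.  The scalar part exceeds
  \<open>(F - C) \<eta>\<close> by \<open>((\<eta> + C) - (\<eta>\<^sub>0 + C\<^sub>0))\<^sup>2 / 2\<close>.  All inequalities are tight at the
  expansion point.  The difference of the two sides is therefore a differentiable function
  with a minimum at the expansion point, so all partial derivatives agree there, and
  convexity holds because \<open>A = (U\<^sup>H H)\<^sup>H W (U\<^sup>H H)\<close> is positive semidefinite.
\<close>

hide_const (open) Matrix.mat Matrix.vec Matrix.row Matrix.col Determinant.det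
no_notation Matrix.vec_index (infixl "$" 100)
no_notation Matrix.scalar_prod (infix "\<bullet>" 70)

lemmas cart_eq_iff = Finite_Cartesian_Product.vec_eq_iff


definition elem_of_index :: "nat \<Rightarrow> 'n::finite" where
  "elem_of_index = (SOME f. bij_betw f {0..<CARD('n)} (UNIV::'n set))"

definition index_of_elem :: "'n::finite \<Rightarrow> nat" where
  "index_of_elem = inv_into {0..<CARD('n)} elem_of_index"

lemma bij_betw_elem_of_index: "bij_betw (elem_of_index::nat \<Rightarrow> 'n::finite) {0..<CARD('n)} UNIV"
proof -
  have "\<exists>f. bij_betw f {0..<CARD('n)} (UNIV::'n set)"
    using ex_bij_betw_nat_finite[of "UNIV::'n set"] by simp
  then show ?thesis unfolding elem_of_index_def by (rule someI_ex)
qed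

lemma bij_betw_index_of_elem: "bij_betw (index_of_elem::'n::finite \<Rightarrow> nat) UNIV {0..<CARD('n)}"
  unfolding index_of_elem_def by (rule bij_betw_inv_into[OF bij_betw_elem_of_index])

lemma index_of_elem_less [simp]: "index_of_elem (a::'n::finite) < CARD('n)"
  using bij_betw_index_of_elem[where 'n='n] by (auto simp: bij_betw_def)

lemma elem_of_index_of_elem [simp]: "elem_of_index (index_of_elem (a::'n::finite)) = a"
  unfolding index_of_elem_def
  using bij_betw_elem_of_index[where 'n='n] by (simp add: bij_betw_inv_into_right)

lemma index_of_elem_of_index [simp]:
  "i < CARD('n::finite) \<Longrightarrow> index_of_elem (elem_of_index i :: 'n) = i"
  unfolding index_of_elem_def
  using bij_betw_elem_of_index[where 'n='n] by (simp add: bij_betw_inv_into_left)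

lemma sum_elem_of_index:
  "(\<Sum>i\<in>{0..<CARD('n::finite)}. f (elem_of_index i :: 'n)) = (\<Sum>a\<in>UNIV. f a)"
  using sum.reindex_bij_betw[OF bij_betw_elem_of_index, of f] by simp

definition jnf_of :: "'a^'n^'n::finite \<Rightarrow> 'a Matrix.mat" where
  "jnf_of A = Matrix.mat CARD('n) CARD('n) (\<lambda>(i,j). A $ elem_of_index i $ elem_of_index j)"

lemma jnf_of_carrier [simp]: "jnf_of (A::'a^'n^'n::finite) \<in> carrier_mat CARD('n) CARD('n)"
  and jnf_of_dim [simp]:
    "dim_row (jnf_of (A::'a^'n^'n::finite)) = CARD('n)" "dim_col (jnf_of A) = CARD('n)"
  unfolding jnf_of_def by auto

lemma jnf_of_index [simp]:
  "i < CARD('n) \<Longrightarrow> j < CARD('n) \<Longrightarrow>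
    jnf_of (A::'a^'n^'n::finite) $$ (i,j) = A $ elem_of_index i $ elem_of_index j"
  unfolding jnf_of_def by auto

lemma jnf_of_mult: "jnf_of ((A::'a::comm_ring_1^'n^'n::finite) ** B) = jnf_of A * jnf_of B"
proof (rule eq_matI)
  fix i j assume "i < dim_row (jnf_of A * jnf_of B)" "j < dim_col (jnf_of A * jnf_of B)"
  then show "jnf_of (A ** B) $$ (i, j) = (jnf_of A * jnf_of B) $$ (i, j)"
    using sum_elem_of_index[of "\<lambda>k. A $ elem_of_index i $ k * B $ k $ elem_of_index j"]
    by (auto simp: matrix_matrix_mult_def scalar_prod_def)
qed auto

lemma jnf_of_add: "jnf_of ((A::'a::comm_ring_1^'n^'n::finite) + B) = jnf_of A + jnf_of B"
  by (rule eq_matI) auto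

lemma jnf_of_one: "jnf_of (mat 1 :: 'a::comm_ring_1^'n^'n::finite) = 1\<^sub>m CARD('n)"
  by (rule eq_matI) (auto simp: Finite_Cartesian_Product.mat_def, metis index_of_elem_of_index)

lemma det_jnf_of: "Determinant.det (jnf_of (A::'a::comm_ring_1^'n^'n::finite)) = det A"
proof -
  let ?n = "CARD('n)"
  let ?S = "{q. q permutes (UNIV::'n set)}"
  let ?T = "{p. p permutes {0..<?n}}"
  have bp: "bij_betw (index_of_elem::'n \<Rightarrow> nat) UNIV {0..<?n}"
    by (rule bij_betw_index_of_elem)
  have ip: "inj_on (index_of_elem::'n \<Rightarrow> nat) UNIV" using bp by (auto simp: bij_betw_def)
  have bi: "bij_betw (elem_of_index::nat \<Rightarrow> 'n) {0..<?n} UNIV" by (rule bij_betw_elem_of_index)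
  have "Determinant.det (jnf_of A)
      = (\<Sum>p\<in>?T. signof p * (\<Prod>i=0..<?n. A $ elem_of_index i $ elem_of_index (p i)))"
    by (subst det_def'[OF jnf_of_carrier]) (auto intro!: sum.cong prod.cong simp: permutes_in_image)
  also have "\<dots> = (\<Sum>q\<in>?S. of_int (sign q) * (\<Prod>a\<in>UNIV. A $ a $ q a))"
  proof (rule sym, rule sum.reindex_bij_witness[where j = "map_permutation UNIV index_of_elem"
        and i = "map_permutation {0..<?n} elem_of_index"])
    fix q assume q: "q \<in> ?S"
    show "map_permutation {0..<?n} elem_of_index (map_permutation UNIV index_of_elem q) = q"
      by (rule map_permutation_compose_inv[OF bp]) (use q in auto)
    show "map_permutation UNIV index_of_elem q \<in> ?T"
      using map_permutation_permutes[OF bp] q by auto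
    have mp: "map_permutation UNIV index_of_elem q (index_of_elem a) = index_of_elem (q a)" for a
      by (rule map_permutation_apply[OF ip]) auto
    have "(\<Prod>i=0..<?n. A $ elem_of_index i $ elem_of_index (map_permutation UNIV index_of_elem q i))
        = (\<Prod>a\<in>UNIV. A $ a $ q a)"
      using prod.reindex_bij_betw[OF bp,
          of "\<lambda>i. A $ elem_of_index i $ elem_of_index (map_permutation UNIV index_of_elem q i)"]
      by (simp add: mp)
    then show "signof (map_permutation UNIV index_of_elem q) *
        (\<Prod>i=0..<?n. A $ elem_of_index i $ elem_of_index (map_permutation UNIV index_of_elem q i))
       = of_int (sign q) * (\<Prod>a\<in>UNIV. A $ a $ q a)"
      using sign_map_permutation[OF ip, of q] q by simp
  next
    fix p assume p: "p \<in> ?T"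
    show "map_permutation UNIV index_of_elem (map_permutation {0..<?n} (elem_of_index::nat \<Rightarrow> 'n) p) = p"
      by (rule map_permutation_compose_inv[OF bi]) (use p in auto)
    show "map_permutation {0..<?n} elem_of_index p \<in> ?S"
      using map_permutation_permutes[OF bi] p by auto
  qed
  also have "\<dots> = det A" by (simp add: Determinants.det_def)
  finally show ?thesis .
qed

definition mat_trace :: "'a::comm_ring_1 Matrix.mat \<Rightarrow> 'a" where
  "mat_trace A = (\<Sum>i=0..<dim_row A. A $$ (i,i))"

lemma mat_trace_mult_comm:
  assumes "X \<in> carrier_mat n n" "Y \<in> carrier_mat n n"
  shows "mat_trace (X * Y) = mat_trace (Y * X)"
proof -
  have "mat_trace (X * Y) = (\<Sum>i=0..<n. \<Sum>k=0..<n. X $$ (i,k) * Y $$ (k,i))"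
    using assms by (auto simp: mat_trace_def scalar_prod_def intro!: sum.cong)
  also have "\<dots> = (\<Sum>k=0..<n. \<Sum>i=0..<n. Y $$ (k,i) * X $$ (i,k))"
    by (subst sum.swap) (simp add: mult.commute)
  also have "\<dots> = mat_trace (Y * X)"
    using assms by (auto simp: mat_trace_def scalar_prod_def intro!: sum.cong)
  finally show ?thesis .
qed

lemma mat_trace_jnf_of: "mat_trace (jnf_of (A::'a::comm_ring_1^'n^'n::finite)) = trace A"
  using sum_elem_of_index[of "\<lambda>a. A $ a $ a"] by (simp add: mat_trace_def trace_def)

lemma eigenvector_of_jnf_of:
  fixes M :: "complex^'n^'n::finite"
  assumes "eigenvalue (jnf_of M) e"
  shows "\<exists>x. x \<noteq> 0 \<and> M *v x = e *s x"
proof -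
  let ?n = "CARD('n)"
  obtain v where v: "v \<in> carrier_vec ?n" "v \<noteq> 0\<^sub>v ?n" "jnf_of M *\<^sub>v v = e \<cdot>\<^sub>v v"
    using assms unfolding eigenvalue_def eigenvector_def by auto
  define x :: "complex^'n" where "x = (\<chi> a. vec_index v (index_of_elem a))"
  have "x \<noteq> 0"
  proof
    assume "x = 0"
    then have "vec_index v i = 0" if "i < ?n" for i
      using that cart_eq_iff[of x 0] by (metis x_def index_of_elem_of_index vec_lambda_beta zero_index)
    then have "v = 0\<^sub>v ?n" using v(1) by (intro eq_vecI) auto
    with v(2) show False by simp
  qed
  moreover have "(M *v x) $ a = (e *s x) $ a" for a
  proof -
    have "vec_index (jnf_of M *\<^sub>v v) (index_of_elem a) = vec_index (e \<cdot>\<^sub>v v) (index_of_elem a)"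
      using v(3) by simp
    then have "(\<Sum>j=0..<?n. M $ a $ elem_of_index j * vec_index v j) = e * vec_index v (index_of_elem a)"
      using v(1) by (simp add: scalar_prod_def)
    moreover have "(\<Sum>j=0..<?n. M $ a $ elem_of_index j * vec_index v j) = (\<Sum>b\<in>UNIV. M $ a $ b * x $ b)"
      using sum_elem_of_index[of "\<lambda>b. M $ a $ b * x $ b"] by (simp add: x_def)
    ultimately show ?thesis by (simp add: matrix_vector_mult_def x_def)
  qed
  ultimately show ?thesis by (auto simp: cart_eq_iff)
qed

text \<open>Triangularize by a Schur decomposition: the diagonal lists the eigenvalues.\<close>

lemma det_trace_eigenvalue_list:
  fixes M :: "complex^'n^'n::finite"
  obtains es where "length es = CARD('n)" "det M = prod_list es" "trace M = sum_list es"
    "\<And>e. e \<in> set es \<Longrightarrow> \<exists>x. x \<noteq> 0 \<and> M *v x = e *s x"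
proof -
  let ?n = "CARD('n)"
  define MJ where "MJ = jnf_of M"
  have MJc: "MJ \<in> carrier_mat ?n ?n" unfolding MJ_def by simp
  obtain es where cp: "char_poly MJ = (\<Prod>a\<leftarrow>es. [:- a, 1:])" and les: "length es = ?n"
    using char_poly_factorized[OF MJc] by blast
  obtain B P Q where sd: "schur_decomposition MJ es = (B,P,Q)"
    by (cases "schur_decomposition MJ es") auto
  from schur_decomposition[OF MJc cp sd]
  have sw: "similar_mat_wit MJ B P Q" and ut: "upper_triangular B" and dg: "diag_mat B = es"
    by auto
  note swD = similar_mat_witD[OF _ sw, of ?n, simplified MJ_def jnf_of_dim, folded MJ_def]
  have "det M = Determinant.det B"
    using det_similar[of MJ B] sw unfolding similar_mat_def MJ_def det_jnf_of by blast
  also have "\<dots> = prod_list es" using det_upper_triangular[OF ut swD(5)] dg by simp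
  finally have "det M = prod_list es" .
  moreover have "trace M = sum_list es"
  proof -
    have "trace M = mat_trace (P * (B * Q))"
      unfolding mat_trace_jnf_of[symmetric] MJ_def[symmetric] using swD(3) swD(5-7)
      by (simp add: assoc_mult_mat)
    also have "\<dots> = mat_trace ((B * Q) * P)"
      by (rule mat_trace_mult_comm[of _ ?n]) (use swD in auto)
    also have "(B * Q) * P = B" using swD(2) swD(5-7) by (simp add: assoc_mult_mat)
    finally show ?thesis
      unfolding dg[symmetric] diag_mat_def mat_trace_def by (simp add: sum_list_sum_nth)
  qed
  moreover have "\<exists>x. x \<noteq> 0 \<and> M *v x = e *s x" if e: "e \<in> set es" for e
  proof -
    have "poly (char_poly MJ) e = 0"
      unfolding cp using e by (induction es) auto
    then show ?thesis
      using eigenvalue_root_char_poly[OF MJc] eigenvector_of_jnf_of unfolding MJ_def by blast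
  qed
  ultimately show ?thesis using that les by blast
qed

lemma ln_prod_list_le_sum_list:
  assumes "\<forall>e\<in>set es. Im e = 0 \<and> Re e > 0"
  shows "Im (prod_list es) = 0 \<and> Re (prod_list es) > 0 \<and>
         ln (Re (prod_list es)) \<le> Re (sum_list es) - real (length es)"
  using assms
proof (induction es)
  case (Cons e es)
  then have IH: "Im (prod_list es) = 0" "Re (prod_list es) > 0"
      "ln (Re (prod_list es)) \<le> Re (sum_list es) - real (length es)"
    and e: "Im e = 0" "Re e > 0" by auto
  have "ln (Re e * Re (prod_list es)) = ln (Re e) + ln (Re (prod_list es))"
    using IH e by (simp add: ln_mult)
  also have "\<dots> \<le> (Re e - 1) + (Re (sum_list es) - real (length es))"
    using ln_le_minus_one[OF e(2)] IH(3) by linarith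
  finally show ?case using IH e by simp
qed simp

lemma ln_det_le_trace_minus_dim:
  fixes M :: "complex^'n^'n::finite"
  assumes pos: "\<And>x l. x \<noteq> 0 \<Longrightarrow> M *v x = l *s x \<Longrightarrow> Im l = 0 \<and> Re l > 0"
  shows "Im (det M) = 0 \<and> Re (det M) > 0 \<and> ln (Re (det M)) \<le> Re (trace M) - real CARD('n)"
proof (rule det_trace_eigenvalue_list[of M])
  fix es :: "complex list"
  assume "length es = CARD('n)" "det M = prod_list es" "trace M = sum_list es"
    and "\<And>e. e \<in> set es \<Longrightarrow> \<exists>x. x \<noteq> 0 \<and> M *v x = e *s x"
  then show ?thesis using ln_prod_list_le_sum_list[of es] pos by metis
qed

lemma det_four_block_mat_swap:
  fixes A B C D :: "'a::comm_ring_1 Matrix.mat"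
  assumes "A \<in> carrier_mat n n" "B \<in> carrier_mat n n" "C \<in> carrier_mat n n" "D \<in> carrier_mat n n"
  shows "Determinant.det (four_block_mat A B C D) = Determinant.det (four_block_mat D C B A)"
proof -
  let ?M = "four_block_mat A B C D"
  define M' where "M' = Matrix.mat (n + n) (n + n)
    (\<lambda>(i,j). ?M $$ ((if i < n then i + n else i - n), j))"
  have "?M \<in> carrier_mat (n + n) (n + n)" using assms by auto
  then have "Determinant.det ?M = (-1)^(n * n) * Determinant.det M'"
    unfolding M'_def by (rule det_swap_rows)
  also have "Determinant.det M' = (-1)^(n * n) * Determinant.det (Matrix.mat (n + n) (n + n)
      (\<lambda>(i,j). M' $$ (i, (if j < n then j + n else j - n))))"
    by (rule det_swap_cols) (simp add: M'_def)
  also have "Matrix.mat (n + n) (n + n) (\<lambda>(i,j). M' $$ (i, (if j < n then j + n else j - n)))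
      = four_block_mat D C B A"
    unfolding M'_def using assms by (rule_tac eq_matI) auto
  finally show ?thesis by (simp add: power_add[symmetric])
qed

text \<open>Sylvester's identity: both sides are determinants of the block matrix \<open>[[I, -X], [Y, I]]\<close>.\<close>

lemma det_one_plus_mult_commute:
  fixes X Y :: "complex^'n^'n::finite"
  shows "det (mat 1 + X ** Y) = det (mat 1 + Y ** X)"
proof -
  let ?n = "CARD('n)" and ?I = "1\<^sub>m CARD('n)"
  let ?X = "jnf_of X" and ?Y = "jnf_of Y"
  have c: "?X \<in> carrier_mat ?n ?n" "?Y \<in> carrier_mat ?n ?n" "?I \<in> carrier_mat ?n ?n" by auto
  have "det (mat 1 + X ** Y) = Determinant.det (?I * ?I - (- ?X) * ?Y)"
    unfolding det_jnf_of[symmetric] using c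
    by (rule_tac arg_cong[of _ _ Determinant.det], rule_tac eq_matI)
      (auto simp: jnf_of_add jnf_of_mult jnf_of_one)
  also have "\<dots> = Determinant.det (four_block_mat ?I (- ?X) ?Y ?I)"
    by (rule det_four_block_mat[symmetric]) (use c in auto)
  also have "\<dots> = Determinant.det (four_block_mat ?I ?Y (- ?X) ?I)"
    by (rule det_four_block_mat_swap) (use c in auto)
  also have "\<dots> = Determinant.det (?I * ?I - ?Y * (- ?X))"
    by (rule det_four_block_mat) (use c in auto)
  also have "\<dots> = det (mat 1 + Y ** X)"
    unfolding det_jnf_of[symmetric] using c
    by (rule_tac arg_cong[of _ _ Determinant.det], rule_tac eq_matI)
      (auto simp: jnf_of_add jnf_of_mult jnf_of_one)
  finally show ?thesis .
qed


lemma matrix_add_rdistrib: "((A::'a::semiring_1^'n^'m) + B) ** C = A ** C + B ** C"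
  by (simp add: cart_eq_iff matrix_matrix_mult_def distrib_right sum.distrib)

lemma matrix_diff_ldistrib: "(A::'a::ring_1^'n^'m) ** (B - C) = A ** B - A ** C"
  by (simp add: cart_eq_iff matrix_matrix_mult_def right_diff_distrib sum_subtractf)

lemma matrix_diff_rdistrib: "((A::'a::ring_1^'n^'m) - B) ** C = A ** C - B ** C"
  by (simp add: cart_eq_iff matrix_matrix_mult_def left_diff_distrib sum_subtractf)

lemma matrix_uminus_left: "(- (A::'a::ring_1^'n^'m)) ** B = - (A ** B)"
  by (simp add: cart_eq_iff matrix_matrix_mult_def sum_negf)

lemma sum_matrix_mult: "(\<Sum>g\<in>X. (f g::'a::semiring_1^'n^'m)) ** B = (\<Sum>g\<in>X. f g ** B)"
proof (induction X rule: infinite_finite_induct)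
  case (insert a F) then show ?case by (simp add: matrix_add_rdistrib)
qed simp_all

lemma matrix_mult_sum: "(B::'a::semiring_1^'n^'m) ** (\<Sum>g\<in>X. f g) = (\<Sum>g\<in>X. B ** f g)"
proof (induction X rule: infinite_finite_induct)
  case (insert a F) then show ?case by (simp add: matrix_add_ldistrib)
qed simp_all

lemma matrix_mult_scaleR: "(A::complex^'n^'m) ** (k *\<^sub>R B) = k *\<^sub>R (A ** B)"
  by (simp add: matrix_scalar_ac scalar_matrix_assoc)

lemma mat_of_real_eq_scaleR: "(mat (complex_of_real s) :: complex^'n^'n) = s *\<^sub>R mat 1"
  by (simp add: cart_eq_iff Finite_Cartesian_Product.mat_def of_real_def)

lemma mat_of_real_mult: "(mat (complex_of_real s) :: complex^'n^'n) ** A = s *\<^sub>R A"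
  by (simp add: mat_of_real_eq_scaleR scalar_matrix_assoc[symmetric])

lemma mult_mat_of_real: "A ** (mat (complex_of_real s) :: complex^'n^'n) = s *\<^sub>R A"
  by (simp add: mat_of_real_eq_scaleR matrix_scalar_ac)

lemma trace_sum: "trace (\<Sum>g\<in>X. f g) = (\<Sum>g\<in>X. trace (f g :: 'a::comm_semiring_1^'n^'n))"
proof (induction X rule: infinite_finite_induct)
  case (insert a F) then show ?case by (simp add: trace_add)
qed (simp_all add: trace_def)

lemma trace_scaleR: "trace (r *\<^sub>R (A :: complex^'n^'n)) = r *\<^sub>R trace A"
  by (simp add: trace_def scaleR_sum_right)

lemma trace_uminus: "trace (- (A :: complex^'n^'n)) = - trace A"
  by (simp add: trace_def sum_negf)

lemma hconj_nth [simp]: "hconj A $ i $ j = cnj (A $ j $ i)"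
  by (simp add: hconj_def)

lemma hconj_hconj [simp]: "hconj (hconj A) = A"
  by (simp add: cart_eq_iff)

lemma hconj_mult: "hconj ((A::complex^'n^'m) ** B) = hconj B ** hconj A"
  by (simp add: cart_eq_iff matrix_matrix_mult_def mult.commute)

lemma hconj_add: "hconj (A + B) = hconj A + hconj (B::complex^'n^'m)"
  by (simp add: cart_eq_iff)

lemma hconj_diff: "hconj (A - B) = hconj A - hconj (B::complex^'n^'m)"
  by (simp add: cart_eq_iff)

lemma hconj_scaleR: "hconj (r *\<^sub>R (A :: complex^'n^'m)) = r *\<^sub>R hconj A"
  by (simp add: cart_eq_iff)

lemma hconj_mat: "hconj (mat c :: complex^'n^'n) = mat (cnj c)"
  by (simp add: cart_eq_iff Finite_Cartesian_Product.mat_def)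

lemma hconj_sum: "hconj (\<Sum>g\<in>X. f g) = (\<Sum>g\<in>X. hconj (f g :: complex^'n^'m))"
  by (induction X rule: infinite_finite_induct) (auto simp: hconj_add cart_eq_iff)

lemma trace_hconj: "trace (hconj (A::complex^'n^'n)) = cnj (trace A)"
  by (simp add: trace_def)

lemma mat_matrix_vector_mult: "(mat c :: 'a::semiring_1^'n^'n) *v x = c *s x"
proof -
  have "(\<Sum>j\<in>UNIV. (if i = j then c else 0) * x $ j) = c * x $ i" for i
    by (simp add: if_distrib[of "\<lambda>a. a * x $ _"] cong: if_cong)
  then show ?thesis
    unfolding cart_eq_iff matrix_vector_mult_def Finite_Cartesian_Product.mat_def by simp
qed

lemma matrix_vector_mult_add_ldistrib: "((A::'a::semiring_1^'n^'m) + B) *v x = A *v x + B *v x"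
  by (simp add: cart_eq_iff matrix_vector_mult_def distrib_right sum.distrib)

lemma sum_matrix_vector_mult: "(\<Sum>g\<in>X. (f g :: 'a::semiring_1^'n^'m)) *v x = (\<Sum>g\<in>X. f g *v x)"
proof (induction X rule: infinite_finite_induct)
  case (insert a F)
  then show ?case by (simp add: matrix_vector_mult_add_ldistrib)
qed (simp_all add: cart_eq_iff matrix_vector_mult_def)


section \<open>Hermitian and positive (semi)definite matrices\<close>

definition cinner :: "complex^'n \<Rightarrow> complex^'n \<Rightarrow> complex" where
  "cinner x y = (\<Sum>i\<in>UNIV. cnj (x $ i) * y $ i)"

lemma cinner_matrix_vector_mult: "cinner x ((A::complex^'n^'m) *v y) = cinner (hconj A *v x) y"
proof -
  have "cinner x (A *v y) = (\<Sum>i\<in>UNIV. \<Sum>j\<in>UNIV. cnj (x $ i) * A $ i $ j * y $ j)"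
    by (simp add: cinner_def matrix_vector_mult_def sum_distrib_left mult.assoc)
  also have "\<dots> = (\<Sum>j\<in>UNIV. \<Sum>i\<in>UNIV. cnj (x $ i) * A $ i $ j * y $ j)"
    by (rule sum.swap)
  also have "\<dots> = cinner (hconj A *v x) y"
    by (simp add: cinner_def matrix_vector_mult_def sum_distrib_right sum_distrib_left mult_ac)
  finally show ?thesis .
qed

lemma cinner_add_right: "cinner x (y + z) = cinner x y + cinner x z"
  by (simp add: cinner_def distrib_left sum.distrib)

lemma cinner_scale_right: "cinner x (c *s y) = c * cinner x y"
  by (simp add: cinner_def sum_distrib_left mult.left_commute)

lemma cinner_sum_right: "cinner x (\<Sum>g\<in>X. f g) = (\<Sum>g\<in>X. cinner x (f g))"
proof (induction X rule: infinite_finite_induct)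
  case (insert a F)
  then show ?case by (simp add: cinner_add_right)
qed (simp_all add: cinner_def)

lemma cinner_commute: "cnj (cinner x y) = cinner y x"
  by (simp add: cinner_def mult.commute)

lemma cinner_self: "cinner x x = of_real (\<Sum>i\<in>UNIV. (cmod (x $ i))\<^sup>2)"
proof -
  have "cnj (x$i) * x$i = of_real ((cmod (x$i))\<^sup>2)" for i
    by (metis complex_norm_square mult.commute of_real_power)
  then show ?thesis by (simp add: cinner_def)
qed

lemma cinner_self_nonneg: "Re (cinner x x) \<ge> 0"
  by (simp add: cinner_self sum_nonneg)

lemma cinner_self_pos: "x \<noteq> 0 \<Longrightarrow> Re (cinner x x) > 0"
proof -
  assume "x \<noteq> 0"
  then obtain i where i: "x $ i \<noteq> 0" by (auto simp: cart_eq_iff)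
  have "(cmod (x $ i))\<^sup>2 \<le> (\<Sum>i\<in>UNIV. (cmod (x $ i))\<^sup>2)"
    by (rule member_le_sum) auto
  moreover have "(cmod (x $ i))\<^sup>2 > 0" using i by simp
  ultimately have "(\<Sum>i\<in>UNIV. (cmod (x $ i))\<^sup>2) > 0" by linarith
  then show ?thesis by (simp add: cinner_self)
qed

definition hermitian :: "complex^'n^'n \<Rightarrow> bool" where
  "hermitian A \<longleftrightarrow> hconj A = A"

definition psd :: "complex^'n^'n \<Rightarrow> bool" where
  "psd A \<longleftrightarrow> (\<forall>x. Re (cinner x (A *v x)) \<ge> 0)"

definition pd :: "complex^'n^'n \<Rightarrow> bool" where
  "pd A \<longleftrightarrow> hermitian A \<and> (\<forall>x. x \<noteq> 0 \<longrightarrow> Re (cinner x (A *v x)) > 0)"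

lemma hermitian_quadratic_form_real: "hermitian A \<Longrightarrow> Im (cinner x (A *v x)) = 0"
proof -
  assume "hermitian A"
  then have "cinner x (A *v x) = cinner (A *v x) x"
    using cinner_matrix_vector_mult[of x A x] by (simp add: hermitian_def)
  also have "\<dots> = cnj (cinner x (A *v x))" by (simp add: cinner_commute)
  finally show ?thesis by (metis Reals_cnj_iff complex_is_Real_iff)
qed

lemma hermitian_add: "hermitian A \<Longrightarrow> hermitian B \<Longrightarrow> hermitian (A + B)"
  by (simp add: hermitian_def hconj_add)

lemma hermitian_sum: "(\<And>g. g \<in> X \<Longrightarrow> hermitian (f g)) \<Longrightarrow> hermitian (\<Sum>g\<in>X. f g)"
  by (simp add: hermitian_def hconj_sum)

lemma hermitian_gram: "hermitian ((X::complex^'k^'n) ** hconj X)"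
  by (simp add: hermitian_def hconj_mult)

lemma hermitian_mat_of_real: "hermitian (mat (complex_of_real c))"
  by (simp add: hermitian_def hconj_mat)

lemma hermitian_congruence: "hermitian A \<Longrightarrow> hermitian (hconj Z ** A ** Z)"
  by (simp add: hermitian_def hconj_mult matrix_mul_assoc)

lemma psd_gram: "psd ((X::complex^'k^'n) ** hconj X)"
  unfolding psd_def
proof
  fix x :: "complex^'n"
  have "cinner x ((X ** hconj X) *v x) = cinner (hconj X *v x) (hconj X *v x)"
    by (simp add: cinner_matrix_vector_mult matrix_vector_mul_assoc[symmetric])
  then show "Re (cinner x ((X ** hconj X) *v x)) \<ge> 0" by (simp add: cinner_self_nonneg)
qed

lemma psd_add: "psd A \<Longrightarrow> psd B \<Longrightarrow> psd (A + B)"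
  by (auto simp: psd_def matrix_vector_mult_add_ldistrib cinner_add_right intro: add_nonneg_nonneg)

lemma psd_sum: "(\<And>g. g \<in> X \<Longrightarrow> psd (f g)) \<Longrightarrow> psd (\<Sum>g\<in>X. f g)"
  unfolding psd_def by (auto simp: sum_matrix_vector_mult cinner_sum_right intro!: sum_nonneg)

lemma psd_mat_of_real: "c \<ge> 0 \<Longrightarrow> psd (mat (complex_of_real c))"
  by (auto simp: psd_def mat_matrix_vector_mult cinner_scale_right cinner_self
      intro!: mult_nonneg_nonneg sum_nonneg)

lemma psd_congruence: "psd A \<Longrightarrow> psd (hconj Z ** A ** Z)"
  unfolding psd_def
proof
  fix x assume "\<forall>x. 0 \<le> Re (cinner x (A *v x))"
  moreover have "cinner x ((hconj Z ** A ** Z) *v x) = cinner (Z *v x) (A *v (Z *v x))"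
    by (simp add: cinner_matrix_vector_mult matrix_vector_mul_assoc[symmetric])
  ultimately show "0 \<le> Re (cinner x ((hconj Z ** A ** Z) *v x))" by simp
qed

lemma psd_if_pd: "pd A \<Longrightarrow> psd A"
  unfolding pd_def psd_def
proof (intro allI)
  fix x assume "hermitian A \<and> (\<forall>x. x \<noteq> 0 \<longrightarrow> 0 < Re (cinner x (A *v x)))"
  then show "0 \<le> Re (cinner x (A *v x))"
    by (cases "x = 0") (auto simp: cinner_def less_imp_le)
qed

lemma trace_congruence:
  "trace (hconj K ** W ** K) = (\<Sum>j\<in>UNIV. cinner (column j K) (W *v column j K))"
  unfolding trace_def
proof (rule sum.cong[OF refl])
  fix j
  have "(hconj K ** W ** K) $ j $ j
      = (\<Sum>k\<in>UNIV. \<Sum>i\<in>UNIV. cnj (K $ i $ j) * W $ i $ k * K $ k $ j)"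
    by (simp add: matrix_matrix_mult_def sum_distrib_right)
  also have "\<dots> = (\<Sum>i\<in>UNIV. \<Sum>k\<in>UNIV. cnj (K $ i $ j) * W $ i $ k * K $ k $ j)"
    by (rule sum.swap)
  also have "\<dots> = cinner (column j K) (W *v column j K)"
    by (simp add: cinner_def column_def matrix_vector_mult_def sum_distrib_left mult.assoc)
  finally show "(hconj K ** W ** K) $ j $ j = cinner (column j K) (W *v column j K)" .
qed

lemma Re_trace_mult_hconj:
  assumes "hermitian W"
  shows "Re (trace (W ** hconj Y)) = Re (trace (W ** Y))"
proof -
  have "trace (W ** hconj Y) = trace (hconj Y ** hconj W)"
    using assms trace_mul_sym[of W "hconj Y"] by (simp add: hermitian_def)
  also have "\<dots> = cnj (trace (W ** Y))" by (simp add: hconj_mult[symmetric] trace_hconj)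
  finally show ?thesis by simp
qed

lemma trace_congruence_nonneg: "psd W \<Longrightarrow> Re (trace (hconj K ** W ** K)) \<ge> 0"
  unfolding trace_congruence psd_def by (simp add: Re_sum sum_nonneg)

lemma trace_mult_gram_nonneg: "psd W \<Longrightarrow> Re (trace (W ** (K ** hconj K))) \<ge> 0"
  using trace_congruence_nonneg[of W K] trace_mul_sym[of W "K ** hconj K"]
    trace_mul_sym[of "hconj K ** W" K]
  by (simp add: matrix_mul_assoc)

lemma trace_nonneg_if_psd: "psd T \<Longrightarrow> Re (trace T) \<ge> 0"
  using trace_congruence_nonneg[of T "mat 1"] by (simp add: hconj_mat)

lemma
  assumes "invertible (A::'a::field^'n^'n)"
  shows matrix_inv_right: "A ** matrix_inv A = mat 1"
    and matrix_inv_left: "matrix_inv A ** A = mat 1"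
proof -
  from assms obtain B where "A ** B = mat 1 \<and> B ** A = mat 1" unfolding invertible_def by blast
  then have "A ** matrix_inv A = mat 1 \<and> matrix_inv A ** A = mat 1"
    unfolding matrix_inv_def by (rule someI)
  then show "A ** matrix_inv A = mat 1" "matrix_inv A ** A = mat 1" by auto
qed

lemma matrix_inv_unique:
  assumes "(A::'a::field^'n^'n) ** B = mat 1"
  shows "matrix_inv A = B" "invertible A"
proof -
  show inv: "invertible A"
    unfolding invertible_def using assms matrix_left_right_inverse by blast
  have "matrix_inv A = matrix_inv A ** (A ** B)" by (simp add: assms)
  also have "\<dots> = B" by (simp add: matrix_mul_assoc matrix_inv_left[OF inv])
  finally show "matrix_inv A = B" .
qed

lemma hermitian_matrix_inv:
  assumes "hermitian A" "invertible A"
  shows "hermitian (matrix_inv A)"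
proof -
  have "A ** hconj (matrix_inv A) = mat 1"
    using arg_cong[OF matrix_inv_left[OF assms(2)], of hconj] assms(1)
    by (simp add: hconj_mult hermitian_def hconj_mat)
  then show ?thesis using matrix_inv_unique(1) unfolding hermitian_def by metis
qed

lemma psd_matrix_inv:
  assumes "hermitian A" "psd A" "invertible A"
  shows "psd (matrix_inv A)"
  unfolding psd_def
proof
  fix y
  define z where "z = matrix_inv A *v y"
  have y: "y = A *v z"
    unfolding z_def by (simp add: matrix_vector_mul_assoc matrix_inv_right[OF assms(3)])
  have "cinner y (matrix_inv A *v y) = cinner z (A *v z)"
    using cinner_matrix_vector_mult[of z A z] assms(1)
    by (simp add: z_def[symmetric] y[symmetric] hermitian_def)
  then show "Re (cinner y (matrix_inv A *v y)) \<ge> 0" using assms(2) by (simp add: psd_def)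
qed

lemma invertible_if_coercive:
  assumes "\<And>x. Re (cinner x ((A::complex^'n^'n) *v x)) \<ge> c * Re (cinner x x)" "c > 0"
  shows "invertible A"
proof -
  have "x = 0" if "A *v x = 0" for x
  proof -
    have "c * Re (cinner x x) \<le> 0" using assms(1)[of x] that by (simp add: cinner_def)
    then have "Re (cinner x x) \<le> 0" using assms(2) by (simp add: mult_le_0_iff)
    then show "x = 0" using cinner_self_pos[of x] by force
  qed
  then show ?thesis using matrix_left_invertible_ker invertible_left_inverse by blast
qed

lemma hermitian_psd_invertible_shift:
  assumes "hermitian P" "psd P" "s > 0"
  shows "hermitian (P + mat (complex_of_real s))" "psd (P + mat (complex_of_real s))"
    "invertible (P + mat (complex_of_real s))"
proof -
  show "hermitian (P + mat (complex_of_real s))"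
    using assms by (intro hermitian_add hermitian_mat_of_real)
  show "psd (P + mat (complex_of_real s))" using assms by (intro psd_add psd_mat_of_real) auto
  show "invertible (P + mat (complex_of_real s))"
  proof (rule invertible_if_coercive[OF _ assms(3)])
    fix x
    have "cinner x ((P + mat (complex_of_real s)) *v x) = cinner x (P *v x) + of_real s * cinner x x"
      by (simp add: matrix_vector_mult_add_ldistrib mat_matrix_vector_mult cinner_add_right
          cinner_scale_right)
    then show "Re (cinner x ((P + mat (complex_of_real s)) *v x)) \<ge> s * Re (cinner x x)"
      using assms(2) by (simp add: psd_def)
  qed
qed

lemma pd_one_plus_congruence:
  fixes G :: "complex^'n^'k" and W :: "complex^'k^'k"
  assumes "hermitian W" "psd W"
  shows "pd (mat 1 + hconj G ** W ** G)"
  unfolding pd_def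
proof (intro conjI allI impI)
  show "hermitian (mat 1 + hconj G ** W ** G)"
    using assms(1) hermitian_mat_of_real[of 1] by (intro hermitian_add hermitian_congruence) auto
  fix x :: "complex^'n" assume x: "x \<noteq> 0"
  have "cinner x ((mat 1 + hconj G ** W ** G) *v x) = cinner x x + cinner x ((hconj G ** W ** G) *v x)"
    by (simp add: matrix_vector_mult_add_ldistrib cinner_add_right)
  moreover have "Re (cinner x ((hconj G ** W ** G) *v x)) \<ge> 0"
    using psd_congruence[OF assms(2), of G] by (simp add: psd_def)
  ultimately show "Re (cinner x ((mat 1 + hconj G ** W ** G) *v x)) > 0"
    using cinner_self_pos[OF x] by simp
qed


section \<open>The log-determinant inequality behind the WMMSE bound\<close>

lemma real_ratio_pos:
  assumes "a = l * c" "Im a = 0" "Re a > 0" "Im c = 0" "Re c > 0"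
  shows "Im l = 0 \<and> Re l > 0"
proof -
  have c0: "c \<noteq> 0" using assms(5) by auto
  have "l = a / c" using assms(1) c0 by simp
  also have "a = of_real (Re a)" using assms(2) by (simp add: complex_eq_iff)
  also have "c = of_real (Re c)" using assms(4) by (simp add: complex_eq_iff)
  finally have "l = of_real (Re a / Re c)" by simp
  then show ?thesis using assms(3,5) by simp
qed

lemma pd_eigenvalue_pos:
  assumes "pd P" "x \<noteq> 0" "P *v x = l *s x"
  shows "Im l = 0 \<and> Re l > 0"
proof (rule real_ratio_pos)
  show "cinner x (P *v x) = l * cinner x x" using assms(3) by (simp add: cinner_scale_right)
  show "Im (cinner x (P *v x)) = 0" using assms(1) hermitian_quadratic_form_real by (auto simp: pd_def)
  show "Re (cinner x (P *v x)) > 0" using assms(1,2) by (auto simp: pd_def)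
qed (use cinner_self_pos[OF assms(2)] in \<open>auto simp: cinner_self\<close>)

text \<open>
  With \<open>y = E x = P\<^sup>-\<^sup>1 x\<close> the eigen-equation reads \<open>W y = l P y\<close>, so \<open>l\<close> is a ratio of two
  positive quadratic forms.
\<close>

lemma pd_mult_inverse_eigenvalue_pos:
  assumes W: "pd W" and P: "pd P" and inv: "E ** P = mat 1" "P ** E = mat 1"
    and x: "x \<noteq> 0" and ev: "(W ** E) *v x = l *s x"
  shows "Im l = 0 \<and> Re l > 0"
proof -
  define y where "y = E *v x"
  have xy: "x = P *v y" unfolding y_def by (simp add: matrix_vector_mul_assoc inv(2))
  have y0: "y \<noteq> 0" using x xy by auto
  have "W *v y = (W ** E) *v x" by (simp add: y_def matrix_vector_mul_assoc)
  then have Wy: "W *v y = l *s (P *v y)" using ev xy by simp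
  show ?thesis
  proof (rule real_ratio_pos)
    show "cinner y (W *v y) = l * cinner y (P *v y)" using Wy by (simp add: cinner_scale_right)
    show "Im (cinner y (W *v y)) = 0" using W hermitian_quadratic_form_real by (auto simp: pd_def)
    show "Re (cinner y (W *v y)) > 0" using W y0 by (auto simp: pd_def)
    show "Im (cinner y (P *v y)) = 0" using P hermitian_quadratic_form_real by (auto simp: pd_def)
    show "Re (cinner y (P *v y)) > 0" using P y0 by (auto simp: pd_def)
  qed
qed

lemma pd_det_pos:
  assumes "pd (P::complex^'n^'n)"
  shows "Im (det P) = 0 \<and> Re (det P) > 0"
  using ln_det_le_trace_minus_dim[of P] pd_eigenvalue_pos[OF assms] by blast

lemma det_inverse_of_pos_real:
  fixes P E :: "complex^'n^'n"
  assumes "P ** E = mat 1" "Im (det P) = 0" "Re (det P) > 0"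
  shows "Im (det E) = 0" "Re (det E) = 1 / Re (det P)"
proof -
  have "det P * det E = 1" using assms(1) by (simp add: det_mul[symmetric])
  moreover have "det P = of_real (Re (det P))" using assms(2) by (simp add: complex_eq_iff)
  ultimately have "det E = 1 / of_real (Re (det P))"
    using assms(3) by (metis nonzero_eq_divide_eq of_real_eq_0_iff less_irrefl mult.commute)
  also have "\<dots> = of_real (1 / Re (det P))" by simp
  finally show "Im (det E) = 0" "Re (det E) = 1 / Re (det P)" by simp_all
qed

lemma ln_det_diff_le_trace_mult_inverse:
  fixes W P E :: "complex^'n^'n"
  assumes W: "pd W" and P: "pd P" and PE: "P ** E = mat 1"
  shows "ln (Re (det W)) - ln (Re (det P)) \<le> Re (trace (W ** E)) - real CARD('n)"
proof -
  have EP: "E ** P = mat 1" using PE matrix_left_right_inverse by blast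
  have M: "Im (det (W ** E)) = 0 \<and> Re (det (W ** E)) > 0
      \<and> ln (Re (det (W ** E))) \<le> Re (trace (W ** E)) - real CARD('n)"
    using pd_mult_inverse_eigenvalue_pos[OF W P EP PE] by (intro ln_det_le_trace_minus_dim)
  have dW: "Im (det W) = 0" "Re (det W) > 0" using pd_det_pos[OF W] by auto
  have dP: "Im (det P) = 0" "Re (det P) > 0" using pd_det_pos[OF P] by auto
  note dE = det_inverse_of_pos_real[OF PE dP]
  have "Re (det (W ** E)) = Re (det W) / Re (det P)"
    using dW dE by (simp add: det_mul)
  then show ?thesis using M dW dP by (simp add: ln_div)
qed

lemma woodbury_identity:
  fixes G S :: "complex^'n^'n"
  assumes iS: "invertible S" and iR: "invertible (S + G ** hconj G)"
  shows "(mat 1 + hconj G ** matrix_inv S ** G)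
      ** (mat 1 - hconj G ** matrix_inv (S + G ** hconj G) ** G) = mat 1"
proof -
  define R where "R = S + G ** hconj G"
  define Si where "Si = matrix_inv S"
  define Ri where "Ri = matrix_inv R"
  have GG: "G ** hconj G = R - S" unfolding R_def by simp
  have a1: "X ** R ** Ri = X" for X :: "complex^'n^'n"
    unfolding Ri_def R_def using matrix_inv_right[OF iR] by (simp add: matrix_mul_assoc[symmetric])
  have a2: "X ** Si ** S = X" for X :: "complex^'n^'n"
    unfolding Si_def using matrix_inv_left[OF iS] by (simp add: matrix_mul_assoc[symmetric])
  have "hconj G ** Si ** G ** (hconj G ** Ri ** G) = hconj G ** Si ** (G ** hconj G) ** Ri ** G"
    by (simp add: matrix_mul_assoc)
  also have "\<dots> = hconj G ** Si ** R ** Ri ** G - hconj G ** Si ** S ** Ri ** G"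
    by (simp add: GG matrix_diff_ldistrib matrix_diff_rdistrib matrix_mul_assoc)
  also have "\<dots> = hconj G ** Si ** G - hconj G ** Ri ** G"
    by (simp add: a1 a2)
  finally have XY: "hconj G ** Si ** G ** (hconj G ** Ri ** G)
      = hconj G ** Si ** G - hconj G ** Ri ** G" .
  have "(mat 1 + hconj G ** Si ** G) ** (mat 1 - hconj G ** Ri ** G)
      = mat 1 - hconj G ** Ri ** G + hconj G ** Si ** G - hconj G ** Si ** G ** (hconj G ** Ri ** G)"
    by (simp add: matrix_add_rdistrib matrix_diff_ldistrib algebra_simps)
  also have "\<dots> = mat 1" by (simp add: XY)
  finally show ?thesis unfolding Si_def Ri_def R_def .
qed


section \<open>The WMMSE bound for the surrogate\<close>

definition eff_channel :: "complex^'m^'n \<Rightarrow> complex^'n^'m^'g \<Rightarrow> 'g \<Rightarrow> complex^'n^'n" where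
  "eff_channel H V g = H ** V $ g"

definition interference_cov ::
    "complex^'m^'n \<Rightarrow> real \<Rightarrow> 'g::finite \<Rightarrow> complex^'n^'m^'g \<Rightarrow> complex^'n^'n" where
  "interference_cov H s gk V =
     (\<Sum>g\<in>UNIV - {gk}. eff_channel H V g ** hconj (eff_channel H V g)) + mat (complex_of_real s)"

definition received_cov :: "complex^'m^'n \<Rightarrow> real \<Rightarrow> complex^'n^'m^'g::finite \<Rightarrow> complex^'n^'n" where
  "received_cov H s V =
     (\<Sum>g\<in>UNIV. eff_channel H V g ** hconj (eff_channel H V g)) + mat (complex_of_real s)"

definition mse_matrix :: "complex^'m^'n \<Rightarrow> real \<Rightarrow> 'g::finite \<Rightarrow> complex^'n^'n
    \<Rightarrow> complex^'n^'m^'g \<Rightarrow> complex^'n^'n" where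
  "mse_matrix H s gk U V = mat 1 - hconj U ** eff_channel H V gk
     - hconj (eff_channel H V gk) ** U + hconj U ** received_cov H s V ** U"

definition mmse_matrix ::
    "complex^'m^'n \<Rightarrow> real \<Rightarrow> 'g::finite \<Rightarrow> complex^'n^'m^'g \<Rightarrow> complex^'n^'n" where
  "mmse_matrix H s gk V = mat 1
     - hconj (eff_channel H V gk) ** matrix_inv (received_cov H s V) ** eff_channel H V gk"

lemma channel_gram_eq: "H ** V $ g ** hconj (V $ g) ** hconj H = eff_channel H V g ** hconj (eff_channel H V g)"
  by (simp add: eff_channel_def hconj_mult matrix_mul_assoc)

lemma Jmat_eq: "Jmat H s gk V = matrix_inv (interference_cov H s gk V)"
  by (simp add: Jmat_def interference_cov_def channel_gram_eq)

lemma received_cov_split: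
  "received_cov H s V = interference_cov H s gk V + eff_channel H V gk ** hconj (eff_channel H V gk)"
proof -
  have "(\<Sum>g\<in>UNIV. eff_channel H V g ** hconj (eff_channel H V g)) =
        eff_channel H V gk ** hconj (eff_channel H V gk)
        + (\<Sum>g\<in>UNIV - {gk}. eff_channel H V g ** hconj (eff_channel H V g))"
    by (rule sum.remove) auto
  then show ?thesis by (simp add: received_cov_def interference_cov_def algebra_simps)
qed

lemma
  assumes "s > 0"
  shows hermitian_interference_cov: "hermitian (interference_cov H s gk V)"
    and psd_interference_cov: "psd (interference_cov H s gk V)"
    and invertible_interference_cov: "invertible (interference_cov H s gk V)"
  unfolding interference_cov_def
  using hermitian_psd_invertible_shift[OF hermitian_sum[OF hermitian_gram] psd_sum[OF psd_gram] assms]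
  by auto

lemma
  assumes "s > 0"
  shows hermitian_received_cov: "hermitian (received_cov H s V)"
    and invertible_received_cov: "invertible (received_cov H s V)"
  unfolding received_cov_def
  using hermitian_psd_invertible_shift[OF hermitian_sum[OF hermitian_gram] psd_sum[OF psd_gram] assms]
  by auto

lemma trace_mult_received_cov_nonneg:
  assumes "psd T" "s > 0"
  shows "Re (trace (T ** received_cov H s V)) \<ge> 0"
proof -
  have "T ** received_cov H s V
      = (\<Sum>g\<in>UNIV. T ** (eff_channel H V g ** hconj (eff_channel H V g))) + s *\<^sub>R T"
    by (simp add: received_cov_def matrix_add_ldistrib matrix_mult_sum mult_mat_of_real)
  then have "Re (trace (T ** received_cov H s V))
      = (\<Sum>g\<in>UNIV. Re (trace (T ** (eff_channel H V g ** hconj (eff_channel H V g)))))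
        + s * Re (trace T)"
    by (simp add: trace_add trace_sum trace_scaleR Re_sum)
  moreover have "(\<Sum>g\<in>UNIV. Re (trace (T ** (eff_channel H V g ** hconj (eff_channel H V g))))) \<ge> 0"
    by (intro sum_nonneg trace_mult_gram_nonneg[OF assms(1)])
  moreover have "s * Re (trace T) \<ge> 0" using trace_nonneg_if_psd[OF assms(1)] assms(2) by simp
  ultimately show ?thesis by linarith
qed

lemma matrix_inv_mmse_matrix:
  assumes "s > 0"
  shows "matrix_inv (mmse_matrix H s gk V)
      = mat 1 + hconj (eff_channel H V gk) ** matrix_inv (interference_cov H s gk V) ** eff_channel H V gk"
    and "mmse_matrix H s gk V ** (mat 1
      + hconj (eff_channel H V gk) ** matrix_inv (interference_cov H s gk V) ** eff_channel H V gk)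
      = mat 1"
proof -
  let ?G = "eff_channel H V gk" and ?S = "interference_cov H s gk V"
  let ?P = "mat 1 + hconj ?G ** matrix_inv ?S ** ?G"
  have "?P ** mmse_matrix H s gk V = mat 1"
    unfolding mmse_matrix_def received_cov_split[of H s V gk]
    using woodbury_identity invertible_interference_cov[OF assms]
      invertible_received_cov[OF assms] received_cov_split[of H s V gk] by metis
  then show inv: "mmse_matrix H s gk V ** ?P = mat 1"
    using matrix_left_right_inverse by blast
  then show "matrix_inv (mmse_matrix H s gk V) = ?P" by (rule matrix_inv_unique)
qed

lemma pd_one_plus_gain:
  assumes "s > 0"
  shows "pd (mat 1 + hconj (eff_channel H V gk) ** matrix_inv (interference_cov H s gk V)
      ** eff_channel H V gk)"
  using assms by (intro pd_one_plus_congruence hermitian_matrix_inv psd_matrix_inv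
      hermitian_interference_cov psd_interference_cov invertible_interference_cov)

lemma mse_matrix_expand:
  "mse_matrix H s gk U V = mat 1 - hconj U ** eff_channel H V gk - hconj (hconj U ** eff_channel H V gk)
     + (\<Sum>g\<in>UNIV. (hconj U ** eff_channel H V g) ** hconj (hconj U ** eff_channel H V g))
     + s *\<^sub>R (hconj U ** U)"
  by (simp add: mse_matrix_def received_cov_def hconj_mult matrix_add_ldistrib matrix_add_rdistrib
      sum_matrix_mult matrix_mult_sum mult_mat_of_real mat_of_real_mult matrix_mul_assoc
      scalar_matrix_assoc[symmetric] matrix_mult_scaleR)

text \<open>Completing the square in the receiver \<open>U\<close>.\<close>

lemma mse_matrix_eq_mmse_plus:
  fixes H :: "complex^'m^'n" and V :: "complex^'n^'m^'g::finite" and U :: "complex^'n^'n" and gk :: 'g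
  assumes "s > 0"
  defines "Z \<equiv> U - matrix_inv (received_cov H s V) ** eff_channel H V gk"
  shows "mse_matrix H s gk U V = mmse_matrix H s gk V + hconj Z ** received_cov H s V ** Z"
proof -
  let ?G = "eff_channel H V gk" and ?R = "received_cov H s V"
  let ?Ri = "matrix_inv ?R"
  have hRi: "hermitian ?Ri" using assms(1) by (intro hermitian_matrix_inv hermitian_received_cov
        invertible_received_cov)
  have hZ: "hconj Z = hconj U - hconj ?G ** ?Ri"
    using hRi by (simp add: Z_def hconj_diff hconj_mult hermitian_def)
  have a1: "X ** ?R ** ?Ri = X" and a2: "X ** ?Ri ** ?R = X" for X :: "complex^'n^'n"
    using matrix_inv_right[OF invertible_received_cov[OF assms(1), of H V]]
      matrix_inv_left[OF invertible_received_cov[OF assms(1), of H V]]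
    by (simp_all add: matrix_mul_assoc[symmetric])
  have "hconj Z ** ?R ** Z = hconj U ** ?R ** U - hconj U ** ?G - hconj ?G ** U + hconj ?G ** ?Ri ** ?G"
    unfolding hZ
    by (simp add: Z_def matrix_diff_ldistrib matrix_diff_rdistrib matrix_mul_assoc a1 a2 algebra_simps)
  then show ?thesis unfolding mse_matrix_def mmse_matrix_def by (simp add: algebra_simps)
qed

lemma Umat_eq: "Umat H s gk V0 = matrix_inv (received_cov H s V0) ** eff_channel H V0 gk"
  by (simp add: Umat_def received_cov_def channel_gram_eq eff_channel_def matrix_mul_assoc)

lemma Qmat_eq:
  assumes "s > 0"
  shows "Qmat H s gk V0 = mmse_matrix H s gk V0"
proof -
  have "hermitian (matrix_inv (received_cov H s V0))"
    using assms by (intro hermitian_matrix_inv hermitian_received_cov invertible_received_cov)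
  then show ?thesis
    by (simp add: Qmat_def mmse_matrix_def Umat_eq eff_channel_def hconj_mult hermitian_def
        matrix_mul_assoc)
qed

lemma pd_matrix_inv_Qmat: "s > 0 \<Longrightarrow> pd (matrix_inv (Qmat H s gk V0))"
  using Qmat_eq matrix_inv_mmse_matrix(1) pd_one_plus_gain by metis

lemma det_one_plus_gain:
  fixes H :: "complex^'m^'n" and V :: "complex^'n^'m^'g::finite" and gk :: 'g
  assumes s: "s > 0"
  defines "G \<equiv> eff_channel H V gk"
  shows "det (mat 1 + G ** hconj G ** Jmat H s gk V) = det (mat 1 + hconj G ** Jmat H s gk V ** G)"
    and "det (mat 1 + G ** hconj G ** Jmat H s gk V)
      = det (received_cov H s V) / det (interference_cov H s gk V)"
    and "Re (det (mat 1 + G ** hconj G ** Jmat H s gk V)) > 0"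
    and "det (interference_cov H s gk V) \<noteq> 0"
proof -
  let ?S = "interference_cov H s gk V"
  have inv: "?S ** matrix_inv ?S = mat 1" "matrix_inv ?S ** ?S = mat 1"
    using invertible_interference_cov[OF s, of H gk V] by (simp_all add: matrix_inv_right matrix_inv_left)
  have dSSi: "det ?S * det (matrix_inv ?S) = 1" using inv by (simp add: det_mul[symmetric])
  then show dS: "det ?S \<noteq> 0" by auto
  from dSSi dS have "det (matrix_inv ?S) = 1 / det ?S" by (simp add: eq_divide_eq mult.commute)
  moreover have "mat 1 + G ** hconj G ** Jmat H s gk V = received_cov H s V ** matrix_inv ?S"
    unfolding received_cov_split[of H s V gk] G_def Jmat_eq by (simp add: matrix_add_rdistrib inv)
  ultimately show "det (mat 1 + G ** hconj G ** Jmat H s gk V) = det (received_cov H s V) / det ?S"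
    by (simp add: det_mul)
  show sylvester: "det (mat 1 + G ** hconj G ** Jmat H s gk V)
      = det (mat 1 + hconj G ** Jmat H s gk V ** G)"
    using det_one_plus_mult_commute[of G "hconj G ** Jmat H s gk V"] by (simp add: matrix_mul_assoc)
  then show "Re (det (mat 1 + G ** hconj G ** Jmat H s gk V)) > 0"
    using pd_det_pos[OF pd_one_plus_gain[OF s, of H V gk]] unfolding G_def Jmat_eq by simp
qed

lemma ln_det_Qmat:
  fixes H :: "complex^'m^'n" and V0 :: "complex^'n^'m^'g::finite" and gk :: 'g
  assumes "s > 0"
  shows "ln (Re (det (Qmat H s gk V0))) = - ln (Re (det (matrix_inv (Qmat H s gk V0))))"
proof -
  let ?W = "matrix_inv (Qmat H s gk V0)"
  have "?W ** Qmat H s gk V0 = mat 1"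
    unfolding Qmat_eq[OF assms] using matrix_inv_mmse_matrix[OF assms, of H gk V0]
    by (simp add: matrix_left_right_inverse)
  then have "Re (det (Qmat H s gk V0)) = 1 / Re (det ?W)"
    using det_inverse_of_pos_real(2) pd_det_pos[OF pd_matrix_inv_Qmat[OF assms]] by blast
  then show ?thesis using pd_det_pos[OF pd_matrix_inv_Qmat[OF assms]] by (simp add: ln_div)
qed

lemma trace_mult_congruence_received_cov_nonneg:
  assumes "psd W" "s > 0"
  shows "Re (trace (W ** (hconj Z ** received_cov H s V ** Z))) \<ge> 0"
proof -
  have "trace (W ** (hconj Z ** received_cov H s V ** Z))
      = trace ((Z ** W ** hconj Z) ** received_cov H s V)"
    using trace_mul_sym[of "W ** (hconj Z ** received_cov H s V)" Z]
    by (simp add: matrix_mul_assoc)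
  moreover have "psd (Z ** W ** hconj Z)"
    using psd_congruence[OF assms(1), of "hconj Z"] by simp
  ultimately show ?thesis using trace_mult_received_cov_nonneg[OF _ assms(2)] by simp
qed

lemma weighted_mse_ge_neg_ln_det:
  fixes H :: "complex^'m^'n" and V V0 :: "complex^'n^'m^'g::finite" and gk :: 'g
  assumes s: "s > 0"
  defines "W \<equiv> matrix_inv (Qmat H s gk V0)" and "G \<equiv> eff_channel H V gk"
  shows "- ln (Re (det (mat 1 + G ** hconj G ** Jmat H s gk V)))
    \<le> Re (trace (W ** mse_matrix H s gk (Umat H s gk V0) V)) + ln (Re (det (Qmat H s gk V0)))
      - real CARD('n)"
proof -
  let ?P = "mat 1 + hconj G ** Jmat H s gk V ** G"
  let ?Z = "Umat H s gk V0 - matrix_inv (received_cov H s V) ** G"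
  have pdW: "pd W" unfolding W_def using pd_matrix_inv_Qmat[OF s] .
  have pdP: "pd ?P" unfolding G_def Jmat_eq using pd_one_plus_gain[OF s] .
  have "?P ** mmse_matrix H s gk V = mat 1"
    using matrix_inv_mmse_matrix(2)[OF s] matrix_left_right_inverse
    unfolding G_def Jmat_eq by blast
  then have "ln (Re (det W)) - ln (Re (det ?P)) \<le> Re (trace (W ** mmse_matrix H s gk V)) - real CARD('n)"
    by (rule ln_det_diff_le_trace_mult_inverse[OF pdW pdP])
  moreover have "Re (trace (W ** mse_matrix H s gk (Umat H s gk V0) V))
      = Re (trace (W ** mmse_matrix H s gk V))
        + Re (trace (W ** (hconj ?Z ** received_cov H s V ** ?Z)))"
    unfolding mse_matrix_eq_mmse_plus[OF s] G_def by (simp add: matrix_add_ldistrib trace_add)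
  moreover have "Re (trace (W ** (hconj ?Z ** received_cov H s V ** ?Z))) \<ge> 0"
    by (rule trace_mult_congruence_received_cov_nonneg[OF psd_if_pd[OF pdW] s])
  ultimately show ?thesis
    unfolding det_one_plus_gain(1)[OF s, of H V gk, folded G_def] W_def ln_det_Qmat[OF s] by linarith
qed

lemma weighted_mse_at_expansion_point:
  fixes H :: "complex^'m^'n" and V0 :: "complex^'n^'m^'g::finite" and gk :: 'g
  assumes s: "s > 0"
  defines "W \<equiv> matrix_inv (Qmat H s gk V0)" and "G \<equiv> eff_channel H V0 gk"
  shows "Re (trace (W ** mse_matrix H s gk (Umat H s gk V0) V0)) + ln (Re (det (Qmat H s gk V0)))
      - real CARD('n) = - ln (Re (det (mat 1 + G ** hconj G ** Jmat H s gk V0)))"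
proof -
  have lnQ: "ln (Re (det (Qmat H s gk V0))) = - ln (Re (det W))"
    unfolding W_def by (rule ln_det_Qmat[OF s])
  have W: "W = mat 1 + hconj G ** Jmat H s gk V0 ** G"
    unfolding W_def G_def Jmat_eq Qmat_eq[OF s] by (rule matrix_inv_mmse_matrix(1)[OF s])
  have "mse_matrix H s gk (Umat H s gk V0) V0 = mmse_matrix H s gk V0"
    using mse_matrix_eq_mmse_plus[OF s, where U = "Umat H s gk V0" and V = V0]
    by (simp add: Umat_eq cart_eq_iff matrix_matrix_mult_def)
  then have "W ** mse_matrix H s gk (Umat H s gk V0) V0 = mat 1"
    unfolding W G_def Jmat_eq using matrix_inv_mmse_matrix(2)[OF s] matrix_left_right_inverse
    by metis
  then show ?thesis
    unfolding det_one_plus_gain(1)[OF s, of H V0 gk, folded G_def] lnQ W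
    by (simp add: trace_I)
qed


lemma fsur_eq_weighted_mse:
  fixes H :: "complex^'m^'n" and V V0 :: "complex^'n^'m^'g::finite" and gk :: 'g
  assumes s: "s > 0"
  shows "fsur H s F gk C0 eta0 V0 C eta V =
    Re (trace (matrix_inv (Qmat H s gk V0) ** mse_matrix H s gk (Umat H s gk V0) V))
    + ln (Re (det (Qmat H s gk V0))) - real CARD('n)
    + ((eta\<^sup>2 + C\<^sup>2) / 2 + F * eta - (eta0 + C0) * (eta + C) + (eta0 + C0)\<^sup>2 / 2)"
proof -
  define U where "U = Umat H s gk V0"
  define W where "W = matrix_inv (Qmat H s gk V0)"
  define Y where "Y g = hconj U ** eff_channel H V g" for g
  have hW: "hermitian W" unfolding W_def using pd_matrix_inv_Qmat[OF s, of H gk V0] by (simp add: pd_def)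
  have t1: "Re (trace (hconj (V $ g) ** Amat H s gk V0 ** (V $ g)))
      = Re (trace (W ** (Y g ** hconj (Y g))))" for g
  proof -
    have "hconj (V $ g) ** Amat H s gk V0 ** (V $ g) = hconj (Y g) ** W ** Y g"
      by (simp add: Amat_def Y_def U_def W_def eff_channel_def hconj_mult matrix_mul_assoc)
    then show ?thesis
      using trace_mul_sym[of "hconj (Y g) ** W" "Y g"] trace_mul_sym[of "Y g ** hconj (Y g)" W]
      by (simp add: matrix_mul_assoc)
  qed
  have t2: "trace (Bmat H s gk V0 ** (V $ gk)) = - trace (W ** Y gk)"
    by (simp add: Bmat_def Y_def U_def W_def eff_channel_def matrix_uminus_left trace_uminus
        matrix_mul_assoc)
  have E: "mse_matrix H s gk U V
      = mat 1 - Y gk - hconj (Y gk) + (\<Sum>g\<in>UNIV. Y g ** hconj (Y g)) + s *\<^sub>R (hconj U ** U)"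
    unfolding Y_def by (rule mse_matrix_expand)
  have trE: "Re (trace (W ** mse_matrix H s gk U V))
     = Re (trace W) - 2 * Re (trace (W ** Y gk)) + (\<Sum>g\<in>UNIV. Re (trace (W ** (Y g ** hconj (Y g)))))
       + s * Re (trace (W ** (hconj U ** U)))"
    unfolding E using Re_trace_mult_hconj[OF hW, of "Y gk"]
    by (simp add: matrix_add_ldistrib matrix_diff_ldistrib trace_add trace_sub trace_sum
        matrix_mult_sum matrix_mult_scaleR trace_scaleR Re_sum)
  have trb: "Re (trace (W ** (mat 1 + mat (complex_of_real s) ** (hconj U ** U))))
      = Re (trace W) + s * Re (trace (W ** (hconj U ** U)))"
    by (simp add: mat_of_real_mult matrix_add_ldistrib trace_add matrix_mult_scaleR trace_scaleR)
  show ?thesis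
    unfolding fsur_def bconst_def W_def[symmetric] U_def[symmetric]
    using trE trb t1 t2 by (simp add: algebra_simps)
qed

lemma rhs_eq: "rhs H s F gk C eta V = (F - C) * eta
    - ln (Re (det (mat 1 + eff_channel H V gk ** hconj (eff_channel H V gk) ** Jmat H s gk V)))"
  by (simp add: rhs_def channel_gram_eq)

lemma fsur_ge_rhs:
  fixes H :: "complex^'m^'n" and V V0 :: "complex^'n^'m^'g::finite" and gk :: 'g
  assumes s: "s > 0"
  shows "rhs H s F gk C eta V \<le> fsur H s F gk C0 eta0 V0 C eta V"
proof -
  have "(eta\<^sup>2 + C\<^sup>2) / 2 + F * eta - (eta0 + C0) * (eta + C) + (eta0 + C0)\<^sup>2 / 2 - (F - C) * eta
      = ((eta + C) - (eta0 + C0))\<^sup>2 / 2"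
    by (simp add: power2_eq_square field_simps)
  then have "(F - C) * eta
      \<le> (eta\<^sup>2 + C\<^sup>2) / 2 + F * eta - (eta0 + C0) * (eta + C) + (eta0 + C0)\<^sup>2 / 2"
    by (smt (verit) zero_le_power2 divide_nonneg_pos)
  moreover have "- ln (Re (det (mat 1 + eff_channel H V gk ** hconj (eff_channel H V gk)
      ** Jmat H s gk V)))
    \<le> Re (trace (matrix_inv (Qmat H s gk V0) ** mse_matrix H s gk (Umat H s gk V0) V))
      + ln (Re (det (Qmat H s gk V0))) - real CARD('n)"
    by (rule weighted_mse_ge_neg_ln_det[OF s])
  ultimately show ?thesis unfolding fsur_eq_weighted_mse[OF s] rhs_eq by linarith
qed

lemma fsur_eq_rhs_at_expansion_point:
  fixes H :: "complex^'m^'n" and V0 :: "complex^'n^'m^'g::finite" and gk :: 'g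
  assumes s: "s > 0"
  shows "fsur H s F gk C0 eta0 V0 C0 eta0 V0 = rhs H s F gk C0 eta0 V0"
proof -
  have "(eta0\<^sup>2 + C0\<^sup>2) / 2 + F * eta0 - (eta0 + C0) * (eta0 + C0) + (eta0 + C0)\<^sup>2 / 2
      = (F - C0) * eta0"
    by (simp add: power2_eq_square field_simps)
  moreover have "Re (trace (matrix_inv (Qmat H s gk V0) ** mse_matrix H s gk (Umat H s gk V0) V0))
      + ln (Re (det (Qmat H s gk V0))) - real CARD('n)
    = - ln (Re (det (mat 1 + eff_channel H V0 gk ** hconj (eff_channel H V0 gk)
      ** Jmat H s gk V0)))"
    by (rule weighted_mse_at_expansion_point[OF s])
  ultimately show ?thesis unfolding fsur_eq_weighted_mse[OF s] rhs_eq by linarith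
qed


section \<open>Matching derivatives\<close>

definition entrywise_differentiable :: "(real \<Rightarrow> 'a::real_normed_field^'c^'r) \<Rightarrow> real \<Rightarrow> bool" where
  "entrywise_differentiable F x \<longleftrightarrow> (\<forall>i j. (\<lambda>s. F s $ i $ j) differentiable at x)"

lemma entrywise_differentiable_const: "entrywise_differentiable (\<lambda>s. A) x"
  by (simp add: entrywise_differentiable_def)

lemma entrywise_differentiable_add:
  "entrywise_differentiable F x \<Longrightarrow> entrywise_differentiable G x
    \<Longrightarrow> entrywise_differentiable (\<lambda>s. F s + G s) x"
  by (simp add: entrywise_differentiable_def differentiable_add)

lemma entrywise_differentiable_mult:
  "entrywise_differentiable F x \<Longrightarrow> entrywise_differentiable G x
    \<Longrightarrow> entrywise_differentiable (\<lambda>s. F s ** G s) x"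
  unfolding entrywise_differentiable_def matrix_matrix_mult_def
  by (auto intro!: differentiable_sum differentiable_mult)

lemma entrywise_differentiable_hconj:
  "entrywise_differentiable F x \<Longrightarrow> entrywise_differentiable (\<lambda>s. hconj (F s)) x"
  unfolding entrywise_differentiable_def hconj_nth
  by (auto intro: differentiable_compose[of cnj, OF bounded_linear_imp_differentiable[OF bounded_linear_cnj]])

lemma entrywise_differentiable_sum:
  "finite X \<Longrightarrow> (\<And>a. a \<in> X \<Longrightarrow> entrywise_differentiable (F a) x)
    \<Longrightarrow> entrywise_differentiable (\<lambda>s. \<Sum>a\<in>X. F a s) x"
  unfolding entrywise_differentiable_def by (auto simp: sum_component intro!: differentiable_sum)

lemma differentiable_prod:
  fixes f :: "'i \<Rightarrow> real \<Rightarrow> 'a::real_normed_field"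
  shows "finite X \<Longrightarrow> (\<And>a. a \<in> X \<Longrightarrow> f a differentiable at x)
    \<Longrightarrow> (\<lambda>s. \<Prod>a\<in>X. f a s) differentiable at x"
  by (induction X rule: finite_induct) (simp_all add: differentiable_mult)

lemma differentiable_det:
  "entrywise_differentiable F x \<Longrightarrow> (\<lambda>s. det (F s :: 'a::real_normed_field^'n^'n)) differentiable at x"
  unfolding Determinants.det_def entrywise_differentiable_def
  by (auto intro!: differentiable_sum differentiable_prod differentiable_mult differentiable_const
      finite_permutations)

lemma differentiable_trace:
  "entrywise_differentiable F x \<Longrightarrow> (\<lambda>s. trace (F s :: 'a::real_normed_field^'n^'n)) differentiable at x"
  unfolding trace_def entrywise_differentiable_def by (auto intro!: differentiable_sum)

lemma differentiable_Re:
  "f differentiable at x \<Longrightarrow> (\<lambda>s. Re (f s)) differentiable at x"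
  by (rule differentiable_compose[of Re, OF bounded_linear_imp_differentiable[OF bounded_linear_Re]])

lemma entrywise_differentiable_received_cov:
  "(\<And>h. entrywise_differentiable (\<lambda>s. V s $ h) x)
    \<Longrightarrow> entrywise_differentiable (\<lambda>s. received_cov H s2 (V s)) x"
  unfolding received_cov_def eff_channel_def
  by (intro entrywise_differentiable_add entrywise_differentiable_sum entrywise_differentiable_mult
      entrywise_differentiable_hconj entrywise_differentiable_const) auto

lemma entrywise_differentiable_interference_cov:
  "(\<And>h. entrywise_differentiable (\<lambda>s. V s $ h) x)
    \<Longrightarrow> entrywise_differentiable (\<lambda>s. interference_cov H s2 gk (V s)) x"
  unfolding interference_cov_def eff_channel_def
  by (intro entrywise_differentiable_add entrywise_differentiable_sum entrywise_differentiable_mult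
      entrywise_differentiable_hconj entrywise_differentiable_const) auto

lemma differentiable_fsur:
  assumes "\<And>h. entrywise_differentiable (\<lambda>s. V s $ h) x"
    and "C differentiable at x" and "eta differentiable at x"
  shows "(\<lambda>s. fsur H s2 F gk C0 eta0 V0 (C s) (eta s) (V s)) differentiable at x"
  unfolding fsur_def power2_eq_square
  by (intro differentiable_add differentiable_diff differentiable_mult differentiable_const
      differentiable_divide differentiable_sum ballI differentiable_Re differentiable_trace
      entrywise_differentiable_mult entrywise_differentiable_hconj entrywise_differentiable_const
      assms) auto

lemma differentiable_rhs:
  fixes H :: "complex^'m^'n" and V :: "real \<Rightarrow> complex^'n^'m^'g::finite" and gk :: 'g
  assumes s: "s2 > 0" and V: "\<And>h. entrywise_differentiable (\<lambda>s. V s $ h) x"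
    and C: "C differentiable at x" and eta: "eta differentiable at x"
  shows "(\<lambda>s. rhs H s2 F gk (C s) (eta s) (V s)) differentiable at x"
proof -
  let ?q = "\<lambda>s. Re (det (received_cov H s2 (V s)) / det (interference_cov H s2 gk (V s)))"
  have "?q x > 0" using det_one_plus_gain(2,3)[OF s] by metis
  then have "ln differentiable at (?q x)"
    using DERIV_ln real_differentiable_def by blast
  then have "(\<lambda>s. (F - C s) * eta s - ln (?q s)) differentiable at x"
    by (intro differentiable_diff differentiable_mult differentiable_const C eta
        differentiable_compose[where f = ln and g = ?q] differentiable_Re differentiable_divide
        differentiable_det entrywise_differentiable_received_cov
        entrywise_differentiable_interference_cov V det_one_plus_gain(4)[OF s])
  then show ?thesis by (simp add: rhs_eq det_one_plus_gain(2)[OF s])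
qed

lemma entrywise_differentiable_Eunit:
  assumes "c differentiable at x"
  shows "entrywise_differentiable (\<lambda>s. (V0 + Eunit g i j (c s)) $ h) x"
  unfolding entrywise_differentiable_def Eunit_def
proof (intro allI)
  fix a b
  show "(\<lambda>s. (V0 + (\<chi> h a b. if h = g \<and> a = i \<and> b = j then c s else 0)) $ h $ a $ b)
      differentiable at x"
    by (cases "h = g \<and> a = i \<and> b = j") (use assms in \<open>auto intro!: differentiable_add differentiable_const\<close>)
qed

lemma Eunit_zero: "Eunit g i j 0 = 0"
  by (simp add: Eunit_def cart_eq_iff)

lemma common_derivative_if_touching:
  fixes f r :: "real \<Rightarrow> real"
  assumes "f differentiable at x" "r differentiable at x" "\<And>t. r t \<le> f t" "f x = r x"
  shows "\<exists>D. (f has_real_derivative D) (at x) \<and> (r has_real_derivative D) (at x)"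
proof -
  obtain Df where Df: "(f has_real_derivative Df) (at x)"
    using assms(1) real_differentiable_def by blast
  obtain Dr where Dr: "(r has_real_derivative Dr) (at x)"
    using assms(2) real_differentiable_def by blast
  have "((\<lambda>t. f t - r t) has_real_derivative Df - Dr) (at x)" by (rule DERIV_diff[OF Df Dr])
  then have "Df - Dr = 0"
    by (rule DERIV_local_min[of _ _ _ 1]) (use assms(3,4) in auto)
  then show ?thesis using Df Dr by auto
qed

lemma fsur_rhs_common_derivative:
  fixes H :: "complex^'m^'n" and V :: "real \<Rightarrow> complex^'n^'m^'g::finite" and gk :: 'g
  assumes s: "s2 > 0" and V: "\<And>h. entrywise_differentiable (\<lambda>s. V s $ h) 0"
    and C: "C differentiable at 0" and eta: "eta differentiable at 0"
    and start: "C 0 = C0" "eta 0 = eta0" "V 0 = V0"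
  shows "\<exists>D. ((\<lambda>s. fsur H s2 F gk C0 eta0 V0 (C s) (eta s) (V s)) has_real_derivative D) (at 0)
    \<and> ((\<lambda>s. rhs H s2 F gk (C s) (eta s) (V s)) has_real_derivative D) (at 0)"
  using fsur_ge_rhs[OF s] fsur_eq_rhs_at_expansion_point[OF s] start
  by (intro common_derivative_if_touching differentiable_fsur differentiable_rhs s V C eta) auto

lemma fsur_rhs_common_derivative_C:
  fixes H :: "complex^'m^'n" and V0 :: "complex^'n^'m^'g::finite" and gk :: 'g
  assumes "s2 > 0"
  shows "\<exists>D. ((\<lambda>s. fsur H s2 F gk C0 eta0 V0 (C0 + s) eta0 V0) has_real_derivative D) (at 0)
    \<and> ((\<lambda>s. rhs H s2 F gk (C0 + s) eta0 V0) has_real_derivative D) (at 0)"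
  by (rule fsur_rhs_common_derivative[OF assms])
    (auto intro: entrywise_differentiable_const differentiable_add differentiable_ident)

lemma fsur_rhs_common_derivative_eta:
  fixes H :: "complex^'m^'n" and V0 :: "complex^'n^'m^'g::finite" and gk :: 'g
  assumes "s2 > 0"
  shows "\<exists>D. ((\<lambda>s. fsur H s2 F gk C0 eta0 V0 C0 (eta0 + s) V0) has_real_derivative D) (at 0)
    \<and> ((\<lambda>s. rhs H s2 F gk C0 (eta0 + s) V0) has_real_derivative D) (at 0)"
  by (rule fsur_rhs_common_derivative[OF assms])
    (auto intro: entrywise_differentiable_const differentiable_add differentiable_ident)

lemma fsur_rhs_common_derivative_Eunit:
  fixes H :: "complex^'m^'n" and V0 :: "complex^'n^'m^'g::finite" and gk :: 'g
  assumes "s2 > 0" "c differentiable at 0" "c 0 = 0"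
  shows "\<exists>D. ((\<lambda>s. fsur H s2 F gk C0 eta0 V0 C0 eta0 (V0 + Eunit g i j (c s))) has_real_derivative D)
      (at 0)
    \<and> ((\<lambda>s. rhs H s2 F gk C0 eta0 (V0 + Eunit g i j (c s))) has_real_derivative D) (at 0)"
  by (rule fsur_rhs_common_derivative[OF assms(1) entrywise_differentiable_Eunit[OF assms(2)]])
    (simp_all add: assms(3) Eunit_zero)


section \<open>Convexity\<close>

lemma convex_on_quadratic_form:
  fixes B :: "'a::real_vector \<Rightarrow> 'a \<Rightarrow> real"
  assumes B: "bilinear B" and l: "linear l" and nonneg: "\<And>z. B z z \<ge> 0"
  shows "convex_on UNIV (\<lambda>x. B x x + l x + c)"
proof (rule convex_onI)
  fix t :: real and x y :: 'a
  assume t: "t > 0" "t < 1"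
  define u where "u = 1 - t"
  have e1: "B (u *\<^sub>R x + t *\<^sub>R y) (u *\<^sub>R x + t *\<^sub>R y)
     = u * u * B x x + u * t * (B x y + B y x) + t * t * B y y"
    by (simp add: bilinear_ladd[OF B] bilinear_radd[OF B] bilinear_lmul[OF B] bilinear_rmul[OF B]
        algebra_simps)
  have e2: "B (x - y) (x - y) = B x x - B x y - B y x + B y y"
    by (simp add: bilinear_lsub[OF B] bilinear_rsub[OF B])
  have e3: "l (u *\<^sub>R x + t *\<^sub>R y) = u * l x + t * l y"
    using l by (simp add: linear_add linear_scale)
  have "u * t * B (x - y) (x - y) \<ge> 0" using nonneg[of "x - y"] t by (simp add: u_def)
  then have "B (u *\<^sub>R x + t *\<^sub>R y) (u *\<^sub>R x + t *\<^sub>R y) + l (u *\<^sub>R x + t *\<^sub>R y) + c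
      \<le> u * (B x x + l x + c) + t * (B y y + l y + c)"
    unfolding e1 e3 e2 by (simp add: u_def algebra_simps)
  then show "B ((1 - t) *\<^sub>R x + t *\<^sub>R y) ((1 - t) *\<^sub>R x + t *\<^sub>R y) + l ((1 - t) *\<^sub>R x + t *\<^sub>R y) + c
      \<le> (1 - t) * (B x x + l x + c) + t * (B y y + l y + c)"
    by (simp only: u_def)
qed simp

definition surrogate_bilinear :: "complex^'m^'m \<Rightarrow> real \<times> real \<times> (complex^'n^'m^'g::finite)
    \<Rightarrow> real \<times> real \<times> (complex^'n^'m^'g) \<Rightarrow> real" where
  "surrogate_bilinear A x y =
    (\<Sum>g\<in>UNIV. Re (trace (hconj (snd (snd x) $ g) ** A ** (snd (snd y) $ g))))
      + (fst (snd x) * fst (snd y) + fst x * fst y) / 2"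

definition surrogate_linear :: "complex^'m^'n \<Rightarrow> real \<Rightarrow> real \<Rightarrow> 'g
    \<Rightarrow> real \<times> real \<times> (complex^'n^'m^'g::finite) \<Rightarrow> real" where
  "surrogate_linear B F c gk x =
    2 * Re (trace (B ** (snd (snd x) $ gk))) + F * fst (snd x) - c * (fst (snd x) + fst x)"

lemma bilinear_surrogate_bilinear:
  "bilinear (surrogate_bilinear A :: real \<times> real \<times> (complex^'n^'m^'g::finite) \<Rightarrow> _)"
  unfolding bilinear_def
proof (intro conjI allI)
  fix x :: "real \<times> real \<times> (complex^'n^'m^'g)"
  show "linear (surrogate_bilinear A x)"
    by (rule linearI) (simp_all add: surrogate_bilinear_def matrix_add_ldistrib trace_add Re_sum
        sum.distrib matrix_mult_scaleR trace_scaleR sum_distrib_left field_simps)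
next
  fix y :: "real \<times> real \<times> (complex^'n^'m^'g)"
  show "linear (\<lambda>x. surrogate_bilinear A x y)"
    by (rule linearI) (simp_all add: surrogate_bilinear_def hconj_add matrix_add_rdistrib trace_add
        Re_sum sum.distrib hconj_scaleR scalar_matrix_assoc[symmetric] trace_scaleR
        sum_distrib_left field_simps)
qed

lemma linear_surrogate_linear: "linear (surrogate_linear B F c gk)"
  by (rule linearI) (simp_all add: surrogate_linear_def matrix_add_ldistrib trace_add
      matrix_mult_scaleR trace_scaleR algebra_simps)

lemma surrogate_bilinear_nonneg:
  assumes "psd A"
  shows "surrogate_bilinear A z z \<ge> 0"
proof -
  have "(\<Sum>g\<in>UNIV. Re (trace (hconj (snd (snd z) $ g) ** A ** (snd (snd z) $ g)))) \<ge> 0"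
    by (intro sum_nonneg trace_congruence_nonneg[OF assms])
  then show ?thesis unfolding surrogate_bilinear_def by simp
qed

lemma psd_Amat:
  assumes "s > 0"
  shows "psd (Amat H s gk V0)"
proof -
  have "Amat H s gk V0 = hconj (hconj (Umat H s gk V0) ** H) ** matrix_inv (Qmat H s gk V0)
      ** (hconj (Umat H s gk V0) ** H)"
    by (simp add: Amat_def hconj_mult matrix_mul_assoc)
  then show ?thesis using psd_congruence[OF psd_if_pd[OF pd_matrix_inv_Qmat[OF assms]]] by simp
qed

lemma fsur_eq_quadratic_form:
  "(\<lambda>(C, eta, V). fsur H s F gk C0 eta0 V0 C eta V)
    = (\<lambda>x. surrogate_bilinear (Amat H s gk V0) x x
        + surrogate_linear (Bmat H s gk V0) F (eta0 + C0) gk x + bconst H s gk C0 eta0 V0)"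
  by (auto simp: fun_eq_iff fsur_def surrogate_bilinear_def surrogate_linear_def power2_eq_square
      algebra_simps)

lemma convex_on_fsur:
  assumes "s > 0"
  shows "convex_on UNIV (\<lambda>(C, eta, V). fsur H s F gk C0 eta0 V0 C eta V)"
  unfolding fsur_eq_quadratic_form
  by (rule convex_on_quadratic_form[OF bilinear_surrogate_bilinear linear_surrogate_linear
        surrogate_bilinear_nonneg[OF psd_Amat[OF assms]]])

lemma quadratic_fun_fsur: "quadratic_fun (\<lambda>(C, eta, V). fsur H s F gk C0 eta0 V0 C eta V)"
  unfolding fsur_eq_quadratic_form quadratic_fun_def
  using bilinear_surrogate_bilinear linear_surrogate_linear by blast


theorem proposition1:
  fixes H :: "'k \<Rightarrow> 't \<Rightarrow> complex^'m^'n"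
    and sig2 :: "'k \<Rightarrow> real"
    and F :: "'g::finite \<Rightarrow> real"
    and gof :: "'k \<Rightarrow> 'g"
    and k :: 'k and t :: 't
    and C0 eta0 :: real
    and V0 :: "complex^'n^'m^'g"
  assumes MN: "CARD('n) < CARD('m)"
    and noise: "\<forall>k. sig2 k > 0"
    and files: "\<forall>g. F g > 0"
  shows
   "(\<forall>C eta V. fsur (H k t) (sig2 k) (F (gof k)) (gof k) C0 eta0 V0 C eta V
                \<ge> rhs (H k t) (sig2 k) (F (gof k)) (gof k) C eta V)
  \<and> fsur (H k t) (sig2 k) (F (gof k)) (gof k) C0 eta0 V0 C0 eta0 V0
      = rhs (H k t) (sig2 k) (F (gof k)) (gof k) C0 eta0 V0
  \<and> (\<exists>D. ((\<lambda>s. fsur (H k t) (sig2 k) (F (gof k)) (gof k) C0 eta0 V0 (C0 + s) eta0 V0)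
              has_real_derivative D) (at 0)
        \<and> ((\<lambda>s. rhs (H k t) (sig2 k) (F (gof k)) (gof k) (C0 + s) eta0 V0)
              has_real_derivative D) (at 0))
  \<and> (\<exists>D. ((\<lambda>s. fsur (H k t) (sig2 k) (F (gof k)) (gof k) C0 eta0 V0 C0 (eta0 + s) V0)
              has_real_derivative D) (at 0)
        \<and> ((\<lambda>s. rhs (H k t) (sig2 k) (F (gof k)) (gof k) C0 (eta0 + s) V0)
              has_real_derivative D) (at 0))
  \<and> (\<forall>g i j. \<exists>D.
        ((\<lambda>s. fsur (H k t) (sig2 k) (F (gof k)) (gof k) C0 eta0 V0 C0 eta0
                 (V0 + Eunit g i j (complex_of_real s))) has_real_derivative D) (at 0)
      \<and> ((\<lambda>s. rhs (H k t) (sig2 k) (F (gof k)) (gof k) C0 eta0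
                 (V0 + Eunit g i j (complex_of_real s))) has_real_derivative D) (at 0))
  \<and> (\<forall>g i j. \<exists>D.
        ((\<lambda>s. fsur (H k t) (sig2 k) (F (gof k)) (gof k) C0 eta0 V0 C0 eta0
                 (V0 + Eunit g i j (\<i> * complex_of_real s))) has_real_derivative D) (at 0)
      \<and> ((\<lambda>s. rhs (H k t) (sig2 k) (F (gof k)) (gof k) C0 eta0
                 (V0 + Eunit g i j (\<i> * complex_of_real s))) has_real_derivative D) (at 0))
  \<and> convex_on UNIV (\<lambda>(C, eta, V). fsur (H k t) (sig2 k) (F (gof k)) (gof k) C0 eta0 V0 C eta V)
  \<and> quadratic_fun (\<lambda>(C, eta, V). fsur (H k t) (sig2 k) (F (gof k)) (gof k) C0 eta0 V0 C eta V)"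
proof -
  have s: "sig2 k > 0" using noise by blast
  have real_dir: "(\<lambda>s. complex_of_real s) differentiable at 0"
    and imag_dir: "(\<lambda>s. \<i> * complex_of_real s) differentiable at 0"
    by (auto intro!: bounded_linear_imp_differentiable bounded_linear_of_real
        differentiable_mult differentiable_const)
  have real_dir_0: "complex_of_real 0 = 0" and imag_dir_0: "\<i> * complex_of_real 0 = 0" by simp_all
  show ?thesis
    by (intro conjI allI fsur_ge_rhs[OF s] fsur_eq_rhs_at_expansion_point[OF s]
        fsur_rhs_common_derivative_C[OF s] fsur_rhs_common_derivative_eta[OF s]
        fsur_rhs_common_derivative_Eunit[OF s real_dir real_dir_0]
        fsur_rhs_common_derivative_Eunit[OF s imag_dir imag_dir_0]
        convex_on_fsur[OF s] quadratic_fun_fsur)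
qed

end
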